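(* Let $\mu$ be a computable measure on $\{0,1\}^{\mathbb{N}}\times\{0,1\}^{\mathbb{N}}$, and let $\mu'$ be the push-forward of $\mu$ under the map $(A,B)\mapsto A\oplus B$. Then a pair $(X,Y)$ is $\mu$-computably random if and only if $X\oplus Y$ is $\mu'$-computably random.
   Context: $A\oplus B$ is the join $A(0)B(0)A(1)B(1)\ldots$. Write $\mu(\sigma)=\mu([\sigma])$ and $\mu(\sigma\times\tau)=\mu([\sigma]\times[\tau])$; a measure is computable if these values are uniformly computable. For a computable measure $\mu$ on $\{0,1\}^{\mathbb{N}}$, $X$ is $\mu$-computably random iff $t(X)<\infty$ for every lower semicomputable $t:\{0,1\}^{\mathbb{N}}\to[0,\infty]$ and every computable measure $\nu$ on $\{0,1\}^{\mathbb{N}}$ with $\int_{[\sigma]}t\,d\mu\le\nu(\sigma)$ for all strings $\sigma$. For a computable measure $\mu$ on the product, $(X,Y)$ is $\mu$-computably random iff $t(X,Y)<\infty$ for every lower semicomputable $t:\{0,1\}^{\mathbb{N}}\times\{0,1\}^{\mathbb{N}}\to[0,\infty]$ and every computable measure $\nu$ on the product with $\int_{[\sigma]\times[\tau]}t\,d\mu\le\nu(\sigma\times\tau)$ for all strings $\sigma,\tau$. *)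

theory Defs
  imports "HOL-Analysis.Analysis" "HOL-Probability.Probability" "HOL-Library.Nat_Bijection"
begin

datatype recf = Zf | Sf | Proj nat | Comp recf "recf list" | Prim recf recf | Mn recf

inductive eval_recf :: "recf \<Rightarrow> nat list \<Rightarrow> nat \<Rightarrow> bool" where
  zero: "eval_recf Zf xs 0"
| succ: "eval_recf Sf (x # xs) (Suc x)"
| proj: "i < length xs \<Longrightarrow> eval_recf (Proj i) xs (xs ! i)"
| comp: "length ys = length gs \<Longrightarrow> (\<forall>i < length gs. eval_recf (gs ! i) xs (ys ! i))
          \<Longrightarrow> eval_recf f ys z \<Longrightarrow> eval_recf (Comp f gs) xs z"
| prim0: "eval_recf f xs y \<Longrightarrow> eval_recf (Prim f g) (0 # xs) y"
| primS: "eval_recf (Prim f g) (n # xs) y \<Longrightarrow> eval_recf g (n # y # xs) z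
          \<Longrightarrow> eval_recf (Prim f g) (Suc n # xs) z"
| mn: "eval_recf f (n # xs) 0 \<Longrightarrow> (\<forall>m < n. \<exists>y. eval_recf f (m # xs) y \<and> 0 < y)
          \<Longrightarrow> eval_recf (Mn f) xs n"

definition computable :: "(nat \<Rightarrow> nat) \<Rightarrow> bool" where
  "computable f \<longleftrightarrow> (\<exists>r. \<forall>n. eval_recf r [n] (f n))"

definition str_code :: "bool list \<Rightarrow> nat" where
  "str_code \<sigma> = list_encode (map of_bool \<sigma>)"

definition rat_dec :: "nat \<Rightarrow> rat" where
  "rat_dec n = (case prod_decode n of (a, b) \<Rightarrow> of_int (int_decode a) / of_nat (Suc b))"

type_synonym cantor = "nat \<Rightarrow> bool"

definition cantor_space :: "cantor measure" where
  "cantor_space = Pi\<^sub>M UNIV (\<lambda>_. count_space UNIV)"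

definition cyl :: "bool list \<Rightarrow> cantor set" where
  "cyl \<sigma> = {X. \<forall>i < length \<sigma>. X i = \<sigma> ! i}"

definition join :: "cantor \<Rightarrow> cantor \<Rightarrow> cantor" where
  "join A B = (\<lambda>n. if even n then A (n div 2) else B (n div 2))"

definition computable_measure :: "cantor measure \<Rightarrow> bool" where
  "computable_measure M \<longleftrightarrow> sets M = sets cantor_space
     \<and> (\<forall>\<sigma>. emeasure M (cyl \<sigma>) \<noteq> \<infinity>)
     \<and> (\<exists>f. computable f \<and> (\<forall>\<sigma> k.
          \<bar>real_of_rat (rat_dec (f (prod_encode (str_code \<sigma>, k)))) - measure M (cyl \<sigma>)\<bar> \<le> 1 / 2 ^ k))"

definition computable_measure2 :: "(cantor \<times> cantor) measure \<Rightarrow> bool" where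
  "computable_measure2 M \<longleftrightarrow> sets M = sets (cantor_space \<Otimes>\<^sub>M cantor_space)
     \<and> (\<forall>\<sigma> \<tau>. emeasure M (cyl \<sigma> \<times> cyl \<tau>) \<noteq> \<infinity>)
     \<and> (\<exists>f. computable f \<and> (\<forall>\<sigma> \<tau> k.
          \<bar>real_of_rat (rat_dec (f (prod_encode (str_code \<sigma>, prod_encode (str_code \<tau>, k)))))
             - measure M (cyl \<sigma> \<times> cyl \<tau>)\<bar> \<le> 1 / 2 ^ k))"

definition lsc :: "(cantor \<Rightarrow> ennreal) \<Rightarrow> bool" where
  "lsc t \<longleftrightarrow> (\<exists>g. computable g \<and> (\<forall>X. t X =
     (SUP p \<in> {(\<sigma>, k). (\<exists>n. g n = prod_encode (str_code \<sigma>, k)) \<and> X \<in> cyl \<sigma>}.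
        ennreal (real_of_rat (rat_dec (snd p))))))"

definition lsc2 :: "(cantor \<times> cantor \<Rightarrow> ennreal) \<Rightarrow> bool" where
  "lsc2 t \<longleftrightarrow> (\<exists>g. computable g \<and> (\<forall>X Y. t (X, Y) =
     (SUP p \<in> {(\<sigma>, \<tau>, k). (\<exists>n. g n = prod_encode (str_code \<sigma>, prod_encode (str_code \<tau>, k)))
                 \<and> X \<in> cyl \<sigma> \<and> Y \<in> cyl \<tau>}.
        ennreal (real_of_rat (rat_dec (snd (snd p)))))))"

definition comp_random :: "cantor measure \<Rightarrow> cantor \<Rightarrow> bool" where
  "comp_random \<mu> X \<longleftrightarrow> (\<forall>t \<nu>. lsc t \<and> computable_measure \<nu>
      \<and> (\<forall>\<sigma>. (\<integral>\<^sup>+ Z \<in> cyl \<sigma>. t Z \<partial>\<mu>) \<le> emeasure \<nu> (cyl \<sigma>)) \<longrightarrow> t X < \<infinity>)"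

definition comp_random2 :: "(cantor \<times> cantor) measure \<Rightarrow> cantor \<times> cantor \<Rightarrow> bool" where
  "comp_random2 \<mu> XY \<longleftrightarrow> (\<forall>t \<nu>. lsc2 t \<and> computable_measure2 \<nu>
      \<and> (\<forall>\<sigma> \<tau>. (\<integral>\<^sup>+ Z \<in> cyl \<sigma> \<times> cyl \<tau>. t Z \<partial>\<mu>) \<le> emeasure \<nu> (cyl \<sigma> \<times> cyl \<tau>))
      \<longrightarrow> t XY < \<infinity>)"

end

theory Submission
  imports Defs
begin

text \<open>The map \<open>(A, B) \<mapsto> A \<oplus> B\<close> is a measurable bijection between the product and
  Cantor space, with measurable inverse \<open>unjoin\<close>, and both directions act effectively on
  cylinders: the preimage of \<open>[\<rho>]\<close> under the join is \<open>[evens \<rho>] \<times> [odds \<rho>]\<close>, and the preimage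
  of \<open>[\<sigma>] \<times> [\<tau>]\<close> under \<open>unjoin\<close> is the finite disjoint union of the cylinders \<open>[\<rho>]\<close> over the
  strings \<open>\<rho>\<close> of length \<open>2 max |\<sigma>| |\<tau>|\<close> that agree with \<open>\<sigma>\<close> on even and with \<open>\<tau>\<close> on odd
  positions. Hence composing a test \<open>t\<close> with the join (or with \<open>unjoin\<close>) and pushing its
  bounding measure \<open>\<nu>\<close> forward along the inverse map yields a test on the other side: lower
  semicomputability, computability of the bound and the integral inequality on cylinders all
  survive, and the two tests agree at \<open>(X, Y)\<close> and at \<open>X \<oplus> Y\<close>.\<close>

section \<open>Recursive functions of several arguments\<close>

definition recfn :: "nat \<Rightarrow> (nat list \<Rightarrow> nat) \<Rightarrow> bool" where
  "recfn n f \<longleftrightarrow> (\<exists>r. \<forall>xs. length xs = n \<longrightarrow> eval_recf r xs (f xs))"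

lemma recfn_cong: "recfn n f \<Longrightarrow> (\<And>xs. length xs = n \<Longrightarrow> f xs = g xs) \<Longrightarrow> recfn n g"
  unfolding recfn_def by metis

lemma recfn_zero: "recfn n (\<lambda>_. 0)"
  unfolding recfn_def by (metis eval_recf.zero)

lemma recfn_proj: "i < n \<Longrightarrow> recfn n (\<lambda>xs. xs ! i)"
  unfolding recfn_def by (metis eval_recf.proj)

lemma recfn_comp:
  assumes g: "recfn m g" and len: "length fs = m" and fs: "\<forall>f\<in>set fs. recfn n f"
  shows "recfn n (\<lambda>xs. g (map (\<lambda>f. f xs) fs))"
proof -
  obtain rg where rg: "\<And>ys. length ys = m \<Longrightarrow> eval_recf rg ys (g ys)" using g unfolding recfn_def by blast
  have "\<forall>i<length fs. \<exists>r. \<forall>xs. length xs = n \<longrightarrow> eval_recf r xs ((fs!i) xs)"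
    using fs unfolding recfn_def by (meson nth_mem)
  then obtain R where R: "\<And>i xs. i < length fs \<Longrightarrow> length xs = n \<Longrightarrow> eval_recf (R i) xs ((fs!i) xs)"
    by metis
  show ?thesis unfolding recfn_def
  proof (intro exI allI impI)
    fix xs :: "nat list" assume xs: "length xs = n"
    show "eval_recf (Comp rg (map R [0..<length fs])) xs (g (map (\<lambda>f. f xs) fs))"
      by (rule eval_recf.comp[where ys="map (\<lambda>f. f xs) fs"]) (auto simp: R xs rg len)
  qed
qed

lemma recfn_suc: "recfn n f \<Longrightarrow> recfn n (\<lambda>xs. Suc (f xs))"
proof -
  assume f: "recfn n f"
  have "recfn 1 (\<lambda>ys. Suc (ys ! 0))" unfolding recfn_def
    by (rule exI[of _ Sf]) (auto simp: length_Suc_conv intro: eval_recf.succ)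
  from recfn_comp[OF this, of "[f]"] f show ?thesis by simp
qed

fun prim_rec :: "(nat list \<Rightarrow> nat) \<Rightarrow> (nat list \<Rightarrow> nat) \<Rightarrow> nat \<Rightarrow> nat list \<Rightarrow> nat" where
  "prim_rec f g 0 xs = f xs"
| "prim_rec f g (Suc k) xs = g (k # prim_rec f g k xs # xs)"

lemma recfn_prim_rec_hd:
  assumes f: "recfn n f" and g: "recfn (Suc (Suc n)) g"
  shows "recfn (Suc n) (\<lambda>xs. prim_rec f g (hd xs) (tl xs))"
proof -
  obtain rf where rf: "\<And>ys. length ys = n \<Longrightarrow> eval_recf rf ys (f ys)" using f unfolding recfn_def by blast
  obtain rg where rg: "\<And>ys. length ys = Suc (Suc n) \<Longrightarrow> eval_recf rg ys (g ys)" using g unfolding recfn_def by blast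
  have *: "length ys = n \<Longrightarrow> eval_recf (Prim rf rg) (k # ys) (prim_rec f g k ys)" for k ys
  proof (induction k)
    case 0 then show ?case by (auto intro: eval_recf.prim0 rf)
  next
    case (Suc k) then show ?case by (auto intro!: eval_recf.primS rg)
  qed
  show ?thesis unfolding recfn_def
    by (rule exI[of _ "Prim rf rg"]) (auto simp: length_Suc_conv *)
qed

lemma recfn_prim_rec:
  assumes b: "recfn n b" and f: "recfn n f" and g: "recfn (Suc (Suc n)) g"
    and h: "\<And>xs. length xs = n \<Longrightarrow> h xs = prim_rec f g (b xs) xs"
  shows "recfn n h"
proof -
  have fs: "\<forall>f\<in>set (b # map (\<lambda>i xs. xs ! i) [0..<n]). recfn n f"
    using b by (auto intro: recfn_proj)
  have "recfn n (\<lambda>xs. prim_rec f g (hd (map (\<lambda>f. f xs) (b # map (\<lambda>i xs. xs ! i) [0..<n])))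
          (tl (map (\<lambda>f. f xs) (b # map (\<lambda>i xs. xs ! i) [0..<n]))))"
    by (rule recfn_comp[OF recfn_prim_rec_hd[OF f g] _ fs]) simp
  then show ?thesis
    by (rule recfn_cong) (simp add: h comp_def, metis map_nth)
qed

lemma recfn_comp1:
  assumes "recfn 1 (\<lambda>xs. h (xs!0))" "recfn n f"
  shows "recfn n (\<lambda>xs. h (f xs))"
  using recfn_comp[OF assms(1), of "[f]"] assms(2) by simp

lemma recfn_comp2:
  assumes "recfn 2 (\<lambda>xs. h (xs!0) (xs!1))" "recfn n f" "recfn n g"
  shows "recfn n (\<lambda>xs. h (f xs) (g xs))"
  using recfn_comp[OF assms(1), of "[f,g]"] assms(2,3) by simp

lemma recfn_comp3:
  assumes "recfn 3 (\<lambda>xs. h (xs!0) (xs!1) (xs!2))" "recfn n f" "recfn n g" "recfn n k"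
  shows "recfn n (\<lambda>xs. h (f xs) (g xs) (k xs))"
  using recfn_comp[OF assms(1), of "[f,g,k]"] assms(2-4) by simp

lemma computable_iff_recfn: "computable f \<longleftrightarrow> recfn 1 (\<lambda>xs. f (xs ! 0))"
proof
  assume "computable f"
  then obtain r where r: "\<And>n. eval_recf r [n] (f n)" unfolding computable_def by blast
  show "recfn 1 (\<lambda>xs. f (xs ! 0))" unfolding recfn_def
  proof (intro exI allI impI)
    fix xs :: "nat list" assume "length xs = 1"
    then have "xs = [xs ! 0]" by (cases xs) auto
    then show "eval_recf r xs (f (xs ! 0))" using r by metis
  qed
next
  assume "recfn 1 (\<lambda>xs. f (xs ! 0))"
  then show "computable f"
    unfolding recfn_def computable_def by (metis length_Cons list.size(3) nth_Cons_0 One_nat_def)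
qed

lemma recfn_computable_comp: "computable f \<Longrightarrow> recfn n g \<Longrightarrow> recfn n (\<lambda>xs. f (g xs))"
  unfolding computable_iff_recfn by (rule recfn_comp1)

lemma recfn_reindex:
  assumes h: "recfn n h" and len: "length is = n" and lt: "\<forall>i\<in>set is. i < m"
  shows "recfn m (\<lambda>xs. h (map (\<lambda>i. xs ! i) is))"
proof -
  have "recfn m (\<lambda>xs. h (map (\<lambda>f. f xs) (map (\<lambda>i xs. xs ! i) is)))"
    by (rule recfn_comp[OF h]) (use len lt in \<open>auto intro: recfn_proj\<close>)
  then show ?thesis by (simp add: comp_def)
qed

lemma recfn_const: "recfn n (\<lambda>_. c)"
  by (induction c) (auto intro: recfn_zero recfn_suc)

lemma prim_rec_add: "prim_rec (\<lambda>xs. xs!1) (\<lambda>ys. Suc (ys!1)) k xs = xs!1 + k"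
  by (induction k) auto

lemma recfn_add2: "recfn 2 (\<lambda>xs. xs!0 + xs!1)"
proof (rule recfn_prim_rec[where b="\<lambda>xs. xs!0" and f="\<lambda>xs. xs!1" and g="\<lambda>ys. Suc (ys!1)"])
  show "recfn (Suc (Suc 2)) (\<lambda>ys. Suc (ys!1))" by (rule recfn_suc, rule recfn_proj) simp
qed (auto intro: recfn_proj simp only: prim_rec_add)

lemma recfn_add: "recfn n f \<Longrightarrow> recfn n g \<Longrightarrow> recfn n (\<lambda>xs. f xs + g xs)"
  using recfn_comp2[OF recfn_add2] by blast

lemma prim_rec_mult: "prim_rec (\<lambda>xs. 0) (\<lambda>ys. ys!1 + ys!2) k xs = xs!0 * k"
  by (induction k) auto

lemma recfn_mult2: "recfn 2 (\<lambda>xs. xs!0 * xs!1)"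
proof (rule recfn_prim_rec[where b="\<lambda>xs. xs!1" and f="\<lambda>xs. 0" and g="\<lambda>ys. ys!1 + ys!2"])
  show "recfn (Suc (Suc 2)) (\<lambda>ys. ys!1 + ys!2)" by (rule recfn_add; rule recfn_proj) simp_all
qed (auto intro: recfn_proj recfn_zero simp only: prim_rec_mult)

lemma recfn_mult: "recfn n f \<Longrightarrow> recfn n g \<Longrightarrow> recfn n (\<lambda>xs. f xs * g xs)"
  using recfn_comp2[OF recfn_mult2] by blast

lemma prim_rec_pred: "prim_rec (\<lambda>xs. 0) (\<lambda>ys. ys!0) k xs = k - 1"
  by (induction k) auto

lemma recfn_pred1: "recfn 1 (\<lambda>xs. xs!0 - 1)"
  by (rule recfn_prim_rec[where b="\<lambda>xs. xs!0" and f="\<lambda>xs. 0" and g="\<lambda>ys. ys!0"])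
     (auto intro: recfn_proj recfn_zero simp: prim_rec_pred)

lemma prim_rec_sub: "prim_rec (\<lambda>xs. xs!0) (\<lambda>ys. ys!1 - 1) k xs = xs!0 - k"
  by (induction k) auto

lemma recfn_sub2: "recfn 2 (\<lambda>xs. xs!0 - xs!1)"
proof (rule recfn_prim_rec[where b="\<lambda>xs. xs!1" and f="\<lambda>xs. xs!0" and g="\<lambda>ys. ys!1 - 1"])
  show "recfn (Suc (Suc 2)) (\<lambda>ys. ys!1 - 1)" by (rule recfn_comp1[OF recfn_pred1], rule recfn_proj) simp
qed (auto intro: recfn_proj simp only: prim_rec_sub)

lemma recfn_sub: "recfn n f \<Longrightarrow> recfn n g \<Longrightarrow> recfn n (\<lambda>xs. f xs - g xs)"
  using recfn_comp2[OF recfn_sub2] by blast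

definition recpred :: "nat \<Rightarrow> (nat list \<Rightarrow> bool) \<Rightarrow> bool" where
  "recpred n P \<longleftrightarrow> recfn n (\<lambda>xs. of_bool (P xs))"

lemma recfn_If:
  assumes "recpred n P" "recfn n f" "recfn n g"
  shows "recfn n (\<lambda>xs. if P xs then f xs else g xs)"
proof -
  have "recfn n (\<lambda>xs. of_bool (P xs) * f xs + (1 - of_bool (P xs)) * g xs)"
    using assms unfolding recpred_def by (intro recfn_add recfn_mult recfn_sub recfn_const)
  then show ?thesis by (rule recfn_cong) auto
qed

lemma recpred_le: "recfn n f \<Longrightarrow> recfn n g \<Longrightarrow> recpred n (\<lambda>xs. f xs \<le> g xs)"
  unfolding recpred_def
  by (rule recfn_cong[where f="\<lambda>xs. 1 - (f xs - g xs)"]) (auto intro: recfn_sub recfn_const)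

lemma recpred_not: "recpred n P \<Longrightarrow> recpred n (\<lambda>xs. \<not> P xs)"
  unfolding recpred_def
  by (rule recfn_cong[where f="\<lambda>xs. 1 - of_bool (P xs)"]) (auto intro: recfn_sub recfn_const)

lemma recpred_and: "recpred n P \<Longrightarrow> recpred n Q \<Longrightarrow> recpred n (\<lambda>xs. P xs \<and> Q xs)"
  unfolding recpred_def
  by (rule recfn_cong[where f="\<lambda>xs. of_bool (P xs) * of_bool (Q xs)"]) (auto intro: recfn_mult)

lemma recpred_eq: "recfn n f \<Longrightarrow> recfn n g \<Longrightarrow> recpred n (\<lambda>xs. f xs = g xs)"
  using recpred_and[OF recpred_le recpred_le, of n f g g f] by (simp add: le_antisym eq_iff)

lemma recpred_less: "recfn n f \<Longrightarrow> recfn n g \<Longrightarrow> recpred n (\<lambda>xs. f xs < g xs)"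
  using recpred_not[OF recpred_le, of n g f] by (simp add: not_le)

lemma prim_rec_sum: "prim_rec (\<lambda>xs. 0) (\<lambda>ys. ys!1 + h (ys!0 # drop 2 ys)) k xs = (\<Sum>i<k. h (i # xs))"
  by (induction k) auto

lemma drop_eq_map_nth: "drop k xs = map (\<lambda>i. xs ! i) [k..<length xs]"
  by (rule nth_equalityI) auto

lemma recfn_shift2: "recfn (Suc n) h \<Longrightarrow> recfn (Suc (Suc n)) (\<lambda>ys. h (ys!0 # drop 2 ys))"
proof -
  assume h: "recfn (Suc n) h"
  have "recfn (Suc (Suc n)) (\<lambda>xs. h (map (\<lambda>i. xs ! i) (0 # [2..<n+2])))"
    by (rule recfn_reindex[OF h]) auto
  then show ?thesis
  proof (rule recfn_cong)
    fix xs :: "nat list" assume "length xs = Suc (Suc n)"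
    then have "n + 2 = length xs" by simp
    then show "h (map (\<lambda>i. xs ! i) (0 # [2..<n+2])) = h (xs ! 0 # drop 2 xs)"
      by (simp only: drop_eq_map_nth[of 2] list.map)
  qed
qed

lemma recfn_shift1: "recfn n h \<Longrightarrow> recfn (Suc (Suc n)) (\<lambda>ys. h (drop 2 ys))"
proof -
  assume h: "recfn n h"
  have "recfn (Suc (Suc n)) (\<lambda>xs. h (map (\<lambda>i. xs ! i) [2..<n+2]))"
    by (rule recfn_reindex[OF h]) auto
  then show ?thesis
  proof (rule recfn_cong)
    fix xs :: "nat list" assume "length xs = Suc (Suc n)"
    then have "n + 2 = length xs" by simp
    then show "h (map (\<lambda>i. xs ! i) [2..<n+2]) = h (drop 2 xs)"
      by (simp only: drop_eq_map_nth[of 2])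
  qed
qed

lemma recfn_sum:
  assumes h: "recfn (Suc n) h" and b: "recfn n b"
  shows "recfn n (\<lambda>xs. \<Sum>i<b xs. h (i # xs))"
proof (rule recfn_prim_rec[OF b recfn_zero])
  show "recfn (Suc (Suc n)) (\<lambda>ys. ys!1 + h (ys!0 # drop 2 ys))"
    by (rule recfn_add[OF recfn_proj recfn_shift2[OF h]]) simp
qed (simp only: prim_rec_sum)

lemma recpred_all:
  assumes P: "recpred (Suc n) P" and b: "recfn n b"
  shows "recpred n (\<lambda>xs. \<forall>i<b xs. P (i # xs))"
  unfolding recpred_def
proof (rule recfn_cong)
  show "recfn n (\<lambda>xs. 1 - (\<Sum>i<b xs. 1 - of_bool (P (i # xs))))"
    using P b unfolding recpred_def by (intro recfn_sub recfn_const recfn_sum) auto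
  fix xs :: "nat list"
  show "1 - (\<Sum>i<b xs. 1 - of_bool (P (i # xs))) = (of_bool (\<forall>i<b xs. P (i # xs)) :: nat)"
  proof -
    define S where "S = (\<Sum>i<b xs. 1 - of_bool (P (i # xs)) :: nat)"
    have A: "S = 0 \<longleftrightarrow> (\<forall>i<b xs. P (i # xs))"
      unfolding S_def by (subst sum_eq_0_iff) auto
    have "1 - S = of_bool (S = 0)" by (cases S) auto
    then show ?thesis using A by (simp add: S_def)
  qed
qed

lemma recpred_cong: "recpred n P \<Longrightarrow> (\<And>xs. length xs = n \<Longrightarrow> P xs = Q xs) \<Longrightarrow> recpred n Q"
  unfolding recpred_def by (erule recfn_cong) auto

lemma div_eq_sum_of_bool:
  assumes "0 < m"
  shows "(\<Sum>i<a. of_bool (Suc i * m \<le> a) :: nat) = a div m"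
proof -
  have "{i. i < a \<and> Suc i * m \<le> a} = {..<a div m}"
  proof (rule set_eqI, rule iffI)
    fix i assume "i \<in> {i. i < a \<and> Suc i * m \<le> a}"
    then show "i \<in> {..<a div m}" using assms
      by (simp add: less_eq_Suc_le less_eq_div_iff_mult_less_eq)
  next
    fix i assume i: "i \<in> {..<a div m}"
    then have "Suc i \<le> a div m" by simp
    then have "Suc i * m \<le> a" using assms by (simp add: less_eq_div_iff_mult_less_eq)
    moreover have "i < a" using i div_le_dividend[of a m]
      by (meson lessThan_iff order_less_le_trans)
    ultimately show "i \<in> {i. i < a \<and> Suc i * m \<le> a}" by simp
  qed
  then show ?thesis by (simp add: sum.If_cases[where P="\<lambda>i. Suc i * m \<le> a"] Int_def)
qed

lemma recfn_lift: "recfn n f \<Longrightarrow> recfn (Suc n) (\<lambda>ys. f (tl ys))"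
proof -
  assume f: "recfn n f"
  have "recfn (Suc n) (\<lambda>xs. f (map (\<lambda>i. xs ! i) [1..<Suc n]))"
    by (rule recfn_reindex[OF f]) auto
  then show ?thesis
  proof (rule recfn_cong)
    fix xs :: "nat list" assume "length xs = Suc n"
    then have "map (\<lambda>i. xs ! i) [1..<Suc n] = tl xs"
      by (intro nth_equalityI) (auto simp del: upt_Suc simp: nth_tl)
    then show "f (map (\<lambda>i. xs ! i) [1..<Suc n]) = f (tl xs)" by simp
  qed
qed

lemma recfn_div: "recfn n f \<Longrightarrow> recfn n g \<Longrightarrow> recfn n (\<lambda>xs. f xs div g xs)"
proof -
  assume f: "recfn n f" and g: "recfn n g"
  have h: "recfn (Suc n) (\<lambda>ys. of_bool (Suc (ys!0) * g (tl ys) \<le> f (tl ys)))"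
    using recpred_le[OF recfn_mult[OF recfn_suc[OF recfn_proj] recfn_lift[OF g]] recfn_lift[OF f]]
    unfolding recpred_def by simp
  have "recfn n (\<lambda>xs. if g xs = 0 then 0 else \<Sum>i<f xs. of_bool (Suc ((i#xs)!0) * g (tl (i#xs)) \<le> f (tl (i#xs))))"
    by (rule recfn_If[OF recpred_eq[OF g recfn_const] recfn_const recfn_sum[OF h f]])
  then show ?thesis
  proof (rule recfn_cong)
    fix xs :: "nat list"
    show "(if g xs = 0 then 0 else \<Sum>i<f xs. of_bool (Suc ((i#xs)!0) * g (tl (i#xs)) \<le> f (tl (i#xs)))) = f xs div g xs"
    proof (cases "g xs = 0")
      case False
      then have "0 < g xs" by simp
      then show ?thesis using False by (simp only: if_False nth_Cons_0 list.sel(3) div_eq_sum_of_bool)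
    qed simp
  qed
qed

lemma recfn_mod: assumes "recfn n f" "recfn n g" shows "recfn n (\<lambda>xs. f xs mod g xs)"
  by (rule recfn_cong[OF recfn_sub[OF assms(1) recfn_mult[OF assms(2) recfn_div[OF assms]]]])
     (simp add: minus_mult_div_eq_mod)

lemma prim_rec_pow2: "prim_rec (\<lambda>xs. 1) (\<lambda>ys. 2 * ys!1) k xs = 2 ^ k"
  by (induction k) auto

lemma recfn_pow2: "recfn n f \<Longrightarrow> recfn n (\<lambda>xs. 2 ^ f xs)"
proof -
  have "recfn 1 (\<lambda>xs. 2 ^ (xs!0))"
  proof (rule recfn_prim_rec[where b="\<lambda>xs. xs!0" and f="\<lambda>xs. 1" and g="\<lambda>ys. 2 * ys!1"])
    show "recfn (Suc (Suc 1)) (\<lambda>ys. 2 * ys!1)" by (rule recfn_mult[OF recfn_const recfn_proj]) simp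
  qed (auto intro: recfn_proj recfn_const simp only: prim_rec_pow2)
  then show "recfn n f \<Longrightarrow> recfn n (\<lambda>xs. 2 ^ f xs)" by (rule recfn_comp1)
qed

lemma prim_rec_triangle: "prim_rec (\<lambda>xs. 0) (\<lambda>ys. ys!1 + Suc (ys!0)) k xs = triangle k"
  by (induction k) auto

lemma recfn_triangle: "recfn n f \<Longrightarrow> recfn n (\<lambda>xs. triangle (f xs))"
proof -
  have "recfn 1 (\<lambda>xs. triangle (xs!0))"
  proof (rule recfn_prim_rec[where b="\<lambda>xs. xs!0" and f="\<lambda>xs. 0" and g="\<lambda>ys. ys!1 + Suc (ys!0)"])
    show "recfn (Suc (Suc 1)) (\<lambda>ys. ys!1 + Suc (ys!0))" by (rule recfn_add[OF recfn_proj recfn_suc[OF recfn_proj]]) simp_all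
  qed (auto intro: recfn_proj recfn_const simp only: prim_rec_triangle)
  then show "recfn n f \<Longrightarrow> recfn n (\<lambda>xs. triangle (f xs))" by (rule recfn_comp1)
qed

lemma recfn_prod_encode: "recfn n f \<Longrightarrow> recfn n g \<Longrightarrow> recfn n (\<lambda>xs. prod_encode (f xs, g xs))"
  unfolding prod_encode_def by (simp add: recfn_add recfn_triangle)

lemma triangle_mono: "i \<le> j \<Longrightarrow> triangle i \<le> triangle j"
  unfolding triangle_def by (intro div_le_mono mult_le_mono) auto

lemma le_triangle: "i \<le> triangle i"
  by (induction i) auto

text \<open>\<open>prod_decode\<close> is defined by unbounded recursion; the diagonal \<open>a + b\<close> of
  \<open>\<langle>a, b\<rangle>\<close> is instead found as the number of triangular numbers \<open>triangle (i + 1) \<le> \<langle>a, b\<rangle>\<close>.\<close>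

definition prod_decode_sum :: "nat \<Rightarrow> nat" where
  "prod_decode_sum n = (\<Sum>i<n. of_bool (triangle (Suc i) \<le> n))"

lemma prod_decode_sum_eq: "prod_decode_sum n = fst (prod_decode n) + snd (prod_decode n)"
proof -
  obtain a b where ab: "prod_decode n = (a, b)" by fastforce
  then have n: "n = triangle (a + b) + a" using prod_decode_inverse[of n] by (simp add: prod_encode_def)
  have "{i. i < n \<and> triangle (Suc i) \<le> n} = {..<a+b}"
  proof (rule set_eqI, rule iffI)
    fix i assume "i \<in> {i. i < n \<and> triangle (Suc i) \<le> n}"
    then have i: "i < n" "triangle (Suc i) \<le> n" by auto
    show "i \<in> {..<a+b}"
    proof (rule ccontr)
      assume "i \<notin> {..<a+b}"
      then have "triangle (Suc (a+b)) \<le> triangle (Suc i)" by (intro triangle_mono) simp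
      then show False using i n by simp
    qed
  next
    fix i assume "i \<in> {..<a+b}"
    then have i: "Suc i \<le> a + b" by simp
    have "triangle (Suc i) \<le> n" using triangle_mono[OF i] n by simp
    moreover have "i < n" using i le_triangle[of "a+b"] n by simp
    ultimately show "i \<in> {i. i < n \<and> triangle (Suc i) \<le> n}" by simp
  qed
  then show ?thesis unfolding prod_decode_sum_def by (simp add: sum.If_cases Int_def ab)
qed

lemma fst_prod_decode_eq: "fst (prod_decode n) = n - triangle (prod_decode_sum n)"
proof -
  obtain a b where ab: "prod_decode n = (a, b)" by fastforce
  then have n: "n = triangle (a + b) + a" using prod_decode_inverse[of n] by (simp add: prod_encode_def)
  show ?thesis using n ab prod_decode_sum_eq[of n] by simp
qed

lemma snd_prod_decode_eq: "snd (prod_decode n) = prod_decode_sum n - fst (prod_decode n)"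
  by (simp add: prod_decode_sum_eq)

lemma recfn_prod_decode_sum: "recfn n f \<Longrightarrow> recfn n (\<lambda>xs. prod_decode_sum (f xs))"
proof -
  have h: "recfn (Suc 1) (\<lambda>ys. of_bool (triangle (Suc (ys!0)) \<le> ys!1))"
    using recpred_le[OF recfn_triangle[OF recfn_suc[OF recfn_proj]] recfn_proj, of 0 "Suc 1" 1]
    unfolding recpred_def by simp
  have "recfn 1 (\<lambda>xs. \<Sum>i<xs!0. (\<lambda>ys. of_bool (triangle (Suc (ys!0)) \<le> ys!1)) (i # xs))"
    by (rule recfn_sum[OF h recfn_proj]) simp
  then have "recfn 1 (\<lambda>xs. prod_decode_sum (xs!0))"
    by (rule recfn_cong) (auto simp: prod_decode_sum_def)
  then show "recfn n f \<Longrightarrow> ?thesis" by (rule recfn_comp1)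
qed

lemma recfn_fst_prod_decode: "recfn n f \<Longrightarrow> recfn n (\<lambda>xs. fst (prod_decode (f xs)))"
  unfolding fst_prod_decode_eq by (intro recfn_sub recfn_triangle recfn_prod_decode_sum)

lemma recfn_snd_prod_decode: "recfn n f \<Longrightarrow> recfn n (\<lambda>xs. snd (prod_decode (f xs)))"
  unfolding snd_prod_decode_eq by (intro recfn_sub recfn_fst_prod_decode recfn_prod_decode_sum)

section \<open>Coded lists\<close>

definition code_tl :: "nat \<Rightarrow> nat" where "code_tl c = snd (prod_decode (c - 1))"

definition code_hd :: "nat \<Rightarrow> nat" where "code_hd c = fst (prod_decode (c - 1))"

definition code_drop :: "nat \<Rightarrow> nat \<Rightarrow> nat" where "code_drop i c = (code_tl ^^ i) c"

definition code_nth :: "nat \<Rightarrow> nat \<Rightarrow> nat" where "code_nth c i = code_hd (code_drop i c)"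

text \<open>The bound \<open>c\<close> in \<open>code_length c\<close> suffices because \<open>length xs \<le> list_encode xs\<close>.\<close>

definition code_length :: "nat \<Rightarrow> nat" where "code_length c = (\<Sum>i<c. of_bool (code_drop i c \<noteq> 0))"

lemma prod_decode_0: "prod_decode 0 = (0, 0)"
  by (simp add: prod_decode_def prod_decode_aux.simps)

lemma list_decode_code_tl: "list_decode (code_tl c) = tl (list_decode c)"
  by (cases c) (auto simp: code_tl_def prod_decode_0 split: prod.splits)

lemma list_decode_eq_Nil: "list_decode c = [] \<longleftrightarrow> c = 0"
  by (cases c) (auto split: prod.splits)

lemma list_decode_code_drop: "list_decode (code_drop i c) = drop i (list_decode c)"
  unfolding code_drop_def
proof (induction i arbitrary: c)
  case (Suc i)
  then show ?case by (simp add: funpow_Suc_right list_decode_code_tl drop_Suc del: funpow.simps)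
qed simp

lemma code_hd_eq: "c \<noteq> 0 \<Longrightarrow> code_hd c = hd (list_decode c)"
  by (cases c) (auto simp: code_hd_def split: prod.splits)

lemma code_nth_eq: "i < length (list_decode c) \<Longrightarrow> code_nth c i = list_decode c ! i"
proof -
  assume i: "i < length (list_decode c)"
  then have "list_decode (code_drop i c) \<noteq> []" by (simp add: list_decode_code_drop)
  then have "code_drop i c \<noteq> 0" by (auto simp: list_decode_eq_Nil)
  then show ?thesis using i by (simp add: code_nth_def code_hd_eq list_decode_code_drop hd_drop_conv_nth)
qed

lemma length_le_list_encode: "length xs \<le> list_encode xs"
proof (induction xs)
  case (Cons x xs)
  then show ?case using le_prod_encode_2[of "list_encode xs" x] by simp
qed simp

lemma code_length_eq: "code_length c = length (list_decode c)"
proof -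
  have le: "length (list_decode c) \<le> c" using length_le_list_encode[of "list_decode c"] by simp
  have "{i. i < c \<and> code_drop i c \<noteq> 0} = {..<length (list_decode c)}"
    using le by (auto simp flip: list_decode_eq_Nil simp: list_decode_code_drop)
  then show ?thesis unfolding code_length_def by (simp add: sum.If_cases Int_def)
qed

lemma recfn_code_tl: "recfn n f \<Longrightarrow> recfn n (\<lambda>xs. code_tl (f xs))"
  unfolding code_tl_def by (intro recfn_snd_prod_decode recfn_sub recfn_const)

lemma recfn_code_hd: "recfn n f \<Longrightarrow> recfn n (\<lambda>xs. code_hd (f xs))"
  unfolding code_hd_def by (intro recfn_fst_prod_decode recfn_sub recfn_const)

lemma prim_rec_code_drop: "prim_rec (\<lambda>xs. xs!1) (\<lambda>ys. code_tl (ys!1)) k xs = code_drop k (xs!1)"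
  by (induction k) (auto simp: code_drop_def)

lemma recfn_code_drop: "recfn n f \<Longrightarrow> recfn n g \<Longrightarrow> recfn n (\<lambda>xs. code_drop (f xs) (g xs))"
proof -
  have "recfn 2 (\<lambda>xs. code_drop (xs!0) (xs!1))"
  proof (rule recfn_prim_rec[where b="\<lambda>xs. xs!0" and f="\<lambda>xs. xs!1" and g="\<lambda>ys. code_tl (ys!1)"])
    show "recfn (Suc (Suc 2)) (\<lambda>ys. code_tl (ys!1))" by (rule recfn_code_tl, rule recfn_proj) simp
  qed (auto intro: recfn_proj simp only: prim_rec_code_drop)
  then show "recfn n f \<Longrightarrow> recfn n g \<Longrightarrow> ?thesis" by (rule recfn_comp2)
qed

lemma recfn_code_nth: "recfn n f \<Longrightarrow> recfn n g \<Longrightarrow> recfn n (\<lambda>xs. code_nth (f xs) (g xs))"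
  unfolding code_nth_def by (intro recfn_code_hd recfn_code_drop)

lemma recfn_code_length: "recfn n f \<Longrightarrow> recfn n (\<lambda>xs. code_length (f xs))"
proof -
  have h: "recfn (Suc 1) (\<lambda>ys. of_bool (\<not> code_drop (ys!0) (ys!1) = 0))"
    using recpred_not[OF recpred_eq[OF recfn_code_drop[OF recfn_proj recfn_proj] recfn_const, of 0 "Suc 1" 1 0]]
    unfolding recpred_def by simp
  have "recfn 1 (\<lambda>xs. \<Sum>i<xs!0. (\<lambda>ys. of_bool (\<not> code_drop (ys!0) (ys!1) = 0)) (i # xs))"
    by (rule recfn_sum[OF h recfn_proj]) simp
  then have "recfn 1 (\<lambda>xs. code_length (xs!0))"
    by (rule recfn_cong) (auto simp: code_length_def)
  then show "recfn n f \<Longrightarrow> ?thesis" by (rule recfn_comp1)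
qed

lemma prim_rec_list_encode_map:
  assumes "k \<le> L xs"
  shows "prim_rec (\<lambda>xs. 0) (\<lambda>ys. Suc (prod_encode (h ((L (drop 2 ys) - Suc (ys!0)) # drop 2 ys), ys!1))) k xs
    = list_encode (map (\<lambda>i. h (i # xs)) [L xs - k..<L xs])"
  using assms
proof (induction k)
  case (Suc k)
  then have lt: "L xs - Suc k < L xs" by simp
  have "Suc (L xs - Suc k) = L xs - k" using Suc.prems by simp
  then have "[L xs - Suc k..<L xs] = (L xs - Suc k) # [L xs - k..<L xs]"
    using upt_conv_Cons[OF lt] by simp
  then show ?case using Suc by simp
qed simp

lemma recfn_list_encode_map:
  assumes h: "recfn (Suc n) h" and L: "recfn n L"
  shows "recfn n (\<lambda>xs. list_encode (map (\<lambda>i. h (i # xs)) [0..<L xs]))"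
proof (rule recfn_prim_rec[OF L recfn_zero])
  let ?fs = "(\<lambda>ys. L (drop 2 ys) - Suc (ys!0)) # map (\<lambda>j ys. ys!(j+2)) [0..<n]"
  have d: "length ys = Suc (Suc n) \<Longrightarrow> map (\<lambda>f. f ys) (map (\<lambda>j ys. ys!(j+2)) [0..<n]) = drop 2 ys" for ys :: "nat list"
    by (intro nth_equalityI) auto
  have "recfn (Suc (Suc n)) (\<lambda>ys. h (map (\<lambda>f. f ys) ?fs))"
    by (rule recfn_comp[OF h]) (auto intro!: recfn_proj recfn_sub recfn_const recfn_suc recfn_shift1[OF L])
  then have "recfn (Suc (Suc n)) (\<lambda>ys. h ((L (drop 2 ys) - Suc (ys!0)) # drop 2 ys))"
    by (rule recfn_cong) (simp only: list.map d)
  then show "recfn (Suc (Suc n)) (\<lambda>ys. Suc (prod_encode (h ((L (drop 2 ys) - Suc (ys!0)) # drop 2 ys), ys!1)))"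
    by (intro recfn_suc recfn_prod_encode recfn_proj) auto
qed (subst prim_rec_list_encode_map, simp_all)

lemma list_decode_str_code: "list_decode (str_code \<sigma>) = map of_bool \<sigma>"
  by (simp add: str_code_def)

lemma code_length_str_code: "code_length (str_code \<sigma>) = length \<sigma>"
  by (simp add: code_length_eq list_decode_str_code)

lemma code_nth_str_code: "i < length \<sigma> \<Longrightarrow> code_nth (str_code \<sigma>) i = of_bool (\<sigma>!i)"
  by (simp add: code_nth_eq list_decode_str_code)

definition evens :: "'a list \<Rightarrow> 'a list" where
  "evens l = map (\<lambda>i. l ! (2*i)) [0..<(length l + 1) div 2]"

definition odds :: "'a list \<Rightarrow> 'a list" where
  "odds l = map (\<lambda>i. l ! (2*i+1)) [0..<length l div 2]"

lemma evens_map: "evens (map f l) = map f (evens l)"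
  by (simp add: evens_def)

lemma odds_map: "odds (map f l) = map f (odds l)"
  by (simp add: odds_def)

definition code_evens :: "nat \<Rightarrow> nat" where "code_evens c = list_encode (evens (list_decode c))"

definition code_odds :: "nat \<Rightarrow> nat" where "code_odds c = list_encode (odds (list_decode c))"

lemma recfn_code_evens: "recfn n f \<Longrightarrow> recfn n (\<lambda>xs. code_evens (f xs))"
proof -
  have "recfn 1 (\<lambda>xs. list_encode (map (\<lambda>i. (\<lambda>ys. code_nth (ys!1) (2 * ys!0)) (i # xs)) [0..<(code_length (xs!0) + 1) div 2]))"
    by (rule recfn_list_encode_map) (auto intro!: recfn_code_nth recfn_mult recfn_const recfn_proj recfn_div recfn_add recfn_code_length recfn_suc)
  then have "recfn 1 (\<lambda>xs. code_evens (xs!0))"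
    by (rule recfn_cong) (auto simp: code_evens_def evens_def code_length_eq code_nth_eq intro!: arg_cong[where f=list_encode])
  then show "recfn n f \<Longrightarrow> ?thesis" by (rule recfn_comp1)
qed

lemma recfn_code_odds: "recfn n f \<Longrightarrow> recfn n (\<lambda>xs. code_odds (f xs))"
proof -
  have "recfn 1 (\<lambda>xs. list_encode (map (\<lambda>i. (\<lambda>ys. code_nth (ys!1) (2 * ys!0 + 1)) (i # xs)) [0..<code_length (xs!0) div 2]))"
    by (rule recfn_list_encode_map) (auto intro!: recfn_code_nth recfn_mult recfn_const recfn_proj recfn_div recfn_add recfn_code_length recfn_suc)
  then have "recfn 1 (\<lambda>xs. code_odds (xs!0))"
    by (rule recfn_cong) (auto simp: code_odds_def odds_def code_length_eq code_nth_eq intro!: arg_cong[where f=list_encode])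
  then show "recfn n f \<Longrightarrow> ?thesis" by (rule recfn_comp1)
qed

lemma code_evens_str_code: "code_evens (str_code \<rho>) = str_code (evens \<rho>)"
  by (simp add: code_evens_def list_decode_str_code evens_map str_code_def)

lemma code_odds_str_code: "code_odds (str_code \<rho>) = str_code (odds \<rho>)"
  by (simp add: code_odds_def list_decode_str_code odds_map str_code_def)

lemma evens_odds_of_bool:
  fixes l :: "nat list"
  assumes e: "evens l = map of_bool \<sigma>" and o: "odds l = map of_bool \<tau>"
  shows "\<exists>\<rho>. l = map of_bool \<rho> \<and> evens \<rho> = \<sigma> \<and> odds \<rho> = \<tau>"
proof -
  have b: "l ! i = 0 \<or> l ! i = 1" if i: "i < length l" for i
  proof (cases "even i")
    case True
    then obtain k where k: "i = 2*k" by blast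
    then have "k < (length l + 1) div 2" using i by linarith
    then have "evens l ! k = l ! i" using k by (simp add: evens_def)
    moreover have "k < length \<sigma>" using \<open>k < (length l + 1) div 2\<close> arg_cong[OF e, of length] by (simp add: evens_def)
    ultimately have "l ! i = of_bool (\<sigma> ! k)" using e by (metis nth_map)
    then show ?thesis by (cases "\<sigma> ! k") simp_all
  next
    case False
    then obtain k where k: "i = 2*k+1" using oddE by blast
    then have "k < length l div 2" using i by linarith
    then have "odds l ! k = l ! i" using k by (simp add: odds_def)
    moreover have "k < length \<tau>" using \<open>k < length l div 2\<close> arg_cong[OF o, of length] by (simp add: odds_def)
    ultimately have "l ! i = of_bool (\<tau> ! k)" using o by (metis nth_map)
    then show ?thesis by (cases "\<tau> ! k") simp_all
  qed
  define \<rho> where "\<rho> = map (\<lambda>x. x \<noteq> 0) l"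
  have l: "l = map of_bool \<rho>"
    unfolding \<rho>_def by (rule nth_equalityI) (use b in force)+
  have inj: "inj (of_bool :: bool \<Rightarrow> nat)" by (auto simp: inj_def)
  have "map (of_bool :: bool \<Rightarrow> nat) (evens \<rho>) = map (of_bool :: bool \<Rightarrow> nat) \<sigma>" using e l by (simp add: evens_map)
  then have "evens \<rho> = \<sigma>" using inj inj_map_eq_map by blast
  moreover have "map (of_bool :: bool \<Rightarrow> nat) (odds \<rho>) = map (of_bool :: bool \<Rightarrow> nat) \<tau>" using o l by (simp add: odds_map)
  then have "odds \<rho> = \<tau>" using inj inj_map_eq_map by blast
  ultimately show ?thesis using l by blast
qed

lemma str_code_evens_odds_of_bool:
  fixes c :: nat
  assumes "code_evens c = str_code \<sigma>" and "code_odds c = str_code \<tau>"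
  shows "\<exists>\<rho>. c = str_code \<rho> \<and> evens \<rho> = \<sigma> \<and> odds \<rho> = \<tau>"
proof -
  have "evens (list_decode c) = map of_bool \<sigma>" "odds (list_decode c) = map of_bool \<tau>"
    using assms by (simp_all add: code_evens_def code_odds_def str_code_def list_encode_eq)
  then obtain \<rho> where "list_decode c = map of_bool \<rho>" "evens \<rho> = \<sigma>" "odds \<rho> = \<tau>"
    using evens_odds_of_bool by blast
  then show ?thesis by (metis list_decode_inverse str_code_def)
qed

text \<open>\<open>interleave_fill l1 l2 j\<close> carries \<open>l1\<close> on its even and \<open>l2\<close> on its odd positions;
  positions beyond their lengths (up to \<open>2 max |l1| |l2|\<close>) are filled with the bits of \<open>j\<close>.\<close>

definition fill_entry :: "nat list \<Rightarrow> nat \<Rightarrow> nat \<Rightarrow> nat \<Rightarrow> nat" where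
  "fill_entry l j i p = (if i < length l then l ! i else (j div 2 ^ p) mod 2)"

definition interleave_fill :: "nat list \<Rightarrow> nat list \<Rightarrow> nat \<Rightarrow> nat list" where
  "interleave_fill l1 l2 j = map (\<lambda>i. if i mod 2 = 0 then fill_entry l1 j (i div 2) i else fill_entry l2 j (i div 2) i)
      [0..<2 * max (length l1) (length l2)]"

definition code_interleave_fill :: "nat \<Rightarrow> nat \<Rightarrow> nat \<Rightarrow> nat" where
  "code_interleave_fill c1 c2 j = list_encode (interleave_fill (list_decode c1) (list_decode c2) j)"

lemma recfn_fill_entry: "recfn n c \<Longrightarrow> recfn n j \<Longrightarrow> recfn n i \<Longrightarrow> recfn n p \<Longrightarrow>
   recfn n (\<lambda>xs. fill_entry (list_decode (c xs)) (j xs) (i xs) (p xs))"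
proof -
  assume c: "recfn n c" and j: "recfn n j" and i: "recfn n i" and p: "recfn n p"
  have "recfn n (\<lambda>xs. if i xs < code_length (c xs) then code_nth (c xs) (i xs) else (j xs div 2 ^ p xs) mod 2)"
    by (intro recfn_If recpred_less recfn_code_length recfn_code_nth recfn_mod recfn_div recfn_pow2 recfn_const c j i p)
  then show ?thesis
    by (rule recfn_cong) (auto simp: fill_entry_def code_length_eq code_nth_eq)
qed

lemma recfn_code_interleave_fill: "recfn n f \<Longrightarrow> recfn n g \<Longrightarrow> recfn n h \<Longrightarrow> recfn n (\<lambda>xs. code_interleave_fill (f xs) (g xs) (h xs))"
proof -
  have "recfn 3 (\<lambda>xs. list_encode (map (\<lambda>i. (\<lambda>ys. if ys!0 mod 2 = 0 then fill_entry (list_decode (ys!1)) (ys!3) (ys!0 div 2) (ys!0)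
      else fill_entry (list_decode (ys!2)) (ys!3) (ys!0 div 2) (ys!0)) (i # xs)) [0..<2 * max (code_length (xs!0)) (code_length (xs!1))]))"
  proof (rule recfn_list_encode_map)
    show "recfn (Suc 3) (\<lambda>ys. if ys!0 mod 2 = 0 then fill_entry (list_decode (ys!1)) (ys!3) (ys!0 div 2) (ys!0)
      else fill_entry (list_decode (ys!2)) (ys!3) (ys!0 div 2) (ys!0))"
      by (intro recfn_If recpred_eq recfn_mod recfn_div recfn_fill_entry recfn_proj recfn_const) auto
    have m: "max a b = (if a \<le> b then b else a)" for a b :: nat by auto
    show "recfn 3 (\<lambda>xs. 2 * max (code_length (xs!0)) (code_length (xs!1)))"
      unfolding m by (intro recfn_mult recfn_const recfn_If recpred_le recfn_code_length recfn_proj) auto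
  qed
  then have "recfn 3 (\<lambda>xs. code_interleave_fill (xs!0) (xs!1) (xs!2))"
    by (rule recfn_cong) (auto simp: code_interleave_fill_def interleave_fill_def code_length_eq cong: if_cong)
  then show "recfn n f \<Longrightarrow> recfn n g \<Longrightarrow> recfn n h \<Longrightarrow> ?thesis" by (rule recfn_comp3)
qed

definition code_bits :: "nat \<Rightarrow> nat \<Rightarrow> nat" where
  "code_bits M j = list_encode (map (\<lambda>i. (j div 2 ^ i) mod 2) [0..<M])"

lemma recfn_code_bits: "recfn n f \<Longrightarrow> recfn n g \<Longrightarrow> recfn n (\<lambda>xs. code_bits (f xs) (g xs))"
proof -
  have "recfn 2 (\<lambda>xs. list_encode (map (\<lambda>i. (\<lambda>ys. (ys!2 div 2 ^ ys!0) mod 2) (i # xs)) [0..<xs!0]))"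
    by (rule recfn_list_encode_map) (auto intro!: recfn_mod recfn_div recfn_pow2 recfn_const recfn_proj)
  then have "recfn 2 (\<lambda>xs. code_bits (xs!0) (xs!1))"
    by (rule recfn_cong) (auto simp: code_bits_def)
  then show "recfn n f \<Longrightarrow> recfn n g \<Longrightarrow> ?thesis" by (rule recfn_comp2)
qed

definition code_compatible :: "nat \<Rightarrow> nat \<Rightarrow> nat \<Rightarrow> bool" where
  "code_compatible c1 c2 j \<longleftrightarrow> (\<forall>i<code_length c1. code_nth c1 i = (j div 2 ^ (2*i)) mod 2)
     \<and> (\<forall>i<code_length c2. code_nth c2 i = (j div 2 ^ (2*i+1)) mod 2)"

lemma recpred_code_compatible: "recfn n f \<Longrightarrow> recfn n g \<Longrightarrow> recfn n h \<Longrightarrow> recpred n (\<lambda>xs. code_compatible (f xs) (g xs) (h xs))"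
proof -
  have "recpred 3 (\<lambda>xs. (\<forall>i<code_length (xs!0). (\<lambda>ys. code_nth (ys!1) (ys!0) = (ys!3 div 2 ^ (2*ys!0)) mod 2) (i # xs))
     \<and> (\<forall>i<code_length (xs!1). (\<lambda>ys. code_nth (ys!2) (ys!0) = (ys!3 div 2 ^ (2*ys!0+1)) mod 2) (i # xs)))"
    by (intro recpred_and recpred_all recpred_eq recfn_code_nth recfn_mod recfn_div recfn_pow2 recfn_mult
        recfn_add recfn_const recfn_proj recfn_code_length) auto
  then have "recpred 3 (\<lambda>xs. code_compatible (xs!0) (xs!1) (xs!2))"
    by (rule recpred_cong) (auto simp: code_compatible_def)
  then show "recfn n f \<Longrightarrow> recfn n g \<Longrightarrow> recfn n h \<Longrightarrow> ?thesis"
    unfolding recpred_def by (rule recfn_comp3)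
qed

section \<open>Coded nonnegative rationals\<close>

text \<open>Codes are read by \<open>rat_dec\<close>; sums clip negative summands to \<open>0\<close>, which costs nothing when
  approximating nonnegative quantities (see \<open>abs_max_0_diff\<close>).\<close>

definition rat_code_num :: "nat \<Rightarrow> nat" where
  "rat_code_num r = (if fst (prod_decode r) mod 2 = 0 then fst (prod_decode r) div 2 else 0)"

definition rat_code_den :: "nat \<Rightarrow> nat" where
  "rat_code_den r = Suc (snd (prod_decode r))"

definition rat_code_add :: "nat \<Rightarrow> nat \<Rightarrow> nat" where
  "rat_code_add r1 r2 = prod_encode (2 * (rat_code_num r1 * rat_code_den r2 + rat_code_num r2 * rat_code_den r1), rat_code_den r1 * rat_code_den r2 - 1)"

lemma recfn_rat_code_add: "recfn n f \<Longrightarrow> recfn n g \<Longrightarrow> recfn n (\<lambda>xs. rat_code_add (f xs) (g xs))"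
proof -
  have a: "recfn n f \<Longrightarrow> recfn n (\<lambda>xs. rat_code_num (f xs))" for n f
    unfolding rat_code_num_def by (intro recfn_If recpred_eq recfn_mod recfn_div recfn_fst_prod_decode recfn_const)
  have b: "recfn n f \<Longrightarrow> recfn n (\<lambda>xs. rat_code_den (f xs))" for n f
    unfolding rat_code_den_def by (intro recfn_suc recfn_snd_prod_decode)
  show "recfn n f \<Longrightarrow> recfn n g \<Longrightarrow> ?thesis"
    unfolding rat_code_add_def by (intro recfn_prod_encode recfn_mult recfn_add recfn_sub a b recfn_const)
qed

lemma rat_dec_nonneg_part: "max 0 (rat_dec r) = of_nat (rat_code_num r) / of_nat (rat_code_den r)"
proof -
  obtain a b where ab: "prod_decode r = (a, b)" by fastforce
  show ?thesis
  proof (cases "a mod 2 = 0")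
    case True
    then have "int_decode a = int (a div 2)" by (auto simp: int_decode_def sum_decode_def)
    then show ?thesis using True by (simp add: rat_dec_def ab rat_code_num_def rat_code_den_def)
  next
    case False
    then have "int_decode a < 0" by (auto simp: int_decode_def sum_decode_def)
    then have "rat_dec r \<le> 0" by (simp add: rat_dec_def ab divide_nonpos_pos)
    then show ?thesis using False by (simp add: rat_code_num_def ab)
  qed
qed

lemma rat_dec_rat_code_add: "rat_dec (rat_code_add r1 r2) = max 0 (rat_dec r1) + max 0 (rat_dec r2)"
proof -
  have d1: "rat_code_den r1 > 0" and d2: "rat_code_den r2 > 0" by (auto simp: rat_code_den_def)
  have "int_decode (2 * (rat_code_num r1 * rat_code_den r2 + rat_code_num r2 * rat_code_den r1)) = int (rat_code_num r1 * rat_code_den r2 + rat_code_num r2 * rat_code_den r1)"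
    by (simp add: int_decode_def sum_decode_def)
  moreover have "Suc 0 \<le> rat_code_den r1 * rat_code_den r2" using d1 d2 by (simp add: Suc_le_eq)
  ultimately have "rat_dec (rat_code_add r1 r2) = of_nat (rat_code_num r1 * rat_code_den r2 + rat_code_num r2 * rat_code_den r1) / of_nat (rat_code_den r1 * rat_code_den r2)"
    by (simp add: rat_dec_def rat_code_add_def of_nat_diff)
  also have "\<dots> = of_nat (rat_code_num r1) / of_nat (rat_code_den r1) + of_nat (rat_code_num r2) / of_nat (rat_code_den r2)"
    using d1 d2 by (simp add: field_simps)
  finally show ?thesis by (simp add: rat_dec_nonneg_part)
qed

lemma rat_dec_0: "rat_dec 0 = 0"
  by (simp add: rat_dec_def prod_decode_0 int_decode_def sum_decode_def)

definition rat_code_sum :: "(nat \<Rightarrow> nat) \<Rightarrow> nat \<Rightarrow> nat" where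
  "rat_code_sum F k = rec_nat 0 (\<lambda>i acc. rat_code_add acc (F i)) k"

lemma rat_code_sum_Suc: "rat_code_sum F (Suc k) = rat_code_add (rat_code_sum F k) (F k)" by (simp add: rat_code_sum_def)

lemma rat_code_sum_0: "rat_code_sum F 0 = 0" by (simp add: rat_code_sum_def)

lemma rat_dec_rat_code_sum: "rat_dec (rat_code_sum F k) = (\<Sum>i<k. max 0 (rat_dec (F i)))"
proof (induction k)
  case (Suc k)
  have "max 0 (rat_dec (rat_code_sum F k)) = rat_dec (rat_code_sum F k)"
    by (cases k) (simp_all add: rat_code_sum_0 rat_dec_0 rat_code_sum_Suc rat_dec_rat_code_add)
  then show ?case by (simp add: rat_code_sum_Suc rat_dec_rat_code_add Suc)
qed (simp add: rat_code_sum_0 rat_dec_0)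

lemma prim_rec_rat_code_sum: "prim_rec (\<lambda>xs. 0) (\<lambda>ys. rat_code_add (ys!1) (F (ys!0 # drop 2 ys))) k xs = rat_code_sum (\<lambda>i. F (i # xs)) k"
  by (induction k) (simp_all add: rat_code_sum_0 rat_code_sum_Suc)

lemma recfn_rat_code_sum:
  assumes F: "recfn (Suc n) F" and b: "recfn n b"
  shows "recfn n (\<lambda>xs. rat_code_sum (\<lambda>i. F (i # xs)) (b xs))"
proof (rule recfn_prim_rec[OF b recfn_zero])
  show "recfn (Suc (Suc n)) (\<lambda>ys. rat_code_add (ys!1) (F (ys!0 # drop 2 ys)))"
    by (rule recfn_rat_code_add[OF recfn_proj recfn_shift2[OF F]]) simp
qed (simp only: prim_rec_rat_code_sum)

lemma real_of_rat_max_0: "real_of_rat (max 0 q) = max 0 (real_of_rat q)"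
  by (simp add: max_def of_rat_less_eq)

lemma abs_max_0_diff: "(m::real) \<ge> 0 \<Longrightarrow> \<bar>max 0 x - m\<bar> \<le> \<bar>x - m\<bar>"
  by (cases "x \<le> 0") (auto simp: max_def)

section \<open>Cantor space, join and unjoin\<close>

lemma space_cantor_space: "space cantor_space = UNIV"
  by (simp add: cantor_space_def space_PiM PiE_UNIV_domain)

lemma sets_coordinate: "{X. X i = b} \<in> sets cantor_space"
proof -
  have "(\<lambda>X. X i) \<in> measurable cantor_space (count_space UNIV)"
    unfolding cantor_space_def by (rule measurable_component_singleton) simp
  then have "(\<lambda>X. X i) -` {b} \<inter> space cantor_space \<in> sets cantor_space"
    by (rule measurable_sets) simp
  then show ?thesis by (simp add: space_cantor_space vimage_def)
qed

lemma sets_cyl[measurable]: "cyl \<sigma> \<in> sets cantor_space"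
proof -
  have "{X \<in> space cantor_space. \<forall>i\<in>{..<length \<sigma>}. X i = \<sigma> ! i} \<in> sets cantor_space"
    by (rule sets.sets_Collect_finite_All) (auto simp: space_cantor_space sets_coordinate)
  then show ?thesis by (simp add: cyl_def space_cantor_space lessThan_iff Ball_def)
qed

lemma coordinate_measurable[measurable]: "(\<lambda>X. X i) \<in> measurable cantor_space (count_space UNIV)"
  unfolding cantor_space_def by (rule measurable_component_singleton) simp

lemma measurable_into_cantor:
  assumes "\<And>i. (\<lambda>x. f x i) \<in> measurable M (count_space UNIV)"
  shows "f \<in> measurable M cantor_space"
  unfolding cantor_space_def
  by (rule measurable_PiM_single') (use assms in \<open>auto simp: space_PiM PiE_UNIV_domain\<close>)

definition unjoin :: "cantor \<Rightarrow> cantor \<times> cantor" where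
  "unjoin Z = ((\<lambda>n. Z (2*n)), (\<lambda>n. Z (2*n+1)))"

definition join_pair :: "cantor \<times> cantor \<Rightarrow> cantor" where
  "join_pair = (\<lambda>(A, B). join A B)"

lemma unjoin_join_pair[simp]: "unjoin (join_pair p) = p"
  by (cases p) (auto simp: join_pair_def unjoin_def join_def fun_eq_iff)

lemma unjoin_measurable[measurable]: "unjoin \<in> measurable cantor_space (cantor_space \<Otimes>\<^sub>M cantor_space)"
  unfolding unjoin_def
  by (intro measurable_Pair measurable_into_cantor) simp_all

lemma join_pair_measurable[measurable]: "join_pair \<in> measurable (cantor_space \<Otimes>\<^sub>M cantor_space) cantor_space"
proof (rule measurable_into_cantor)
  fix i
  show "(\<lambda>x. join_pair x i) \<in> measurable (cantor_space \<Otimes>\<^sub>M cantor_space) (count_space UNIV)"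
  proof (cases "even i")
    case True
    then have "(\<lambda>x. join_pair x i) = (\<lambda>x. fst x (i div 2))" by (auto simp: join_pair_def join_def)
    then show ?thesis by simp
  next
    case False
    then have "(\<lambda>x. join_pair x i) = (\<lambda>x. snd x (i div 2))" by (auto simp: join_pair_def join_def)
    then show ?thesis by simp
  qed
qed

lemma join_in_cyl: "join A B \<in> cyl \<rho> \<longleftrightarrow> A \<in> cyl (evens \<rho>) \<and> B \<in> cyl (odds \<rho>)"
proof
  assume "join A B \<in> cyl \<rho>"
  then have h: "\<And>i. i < length \<rho> \<Longrightarrow> join A B i = \<rho> ! i" by (auto simp: cyl_def)
  have "A \<in> cyl (evens \<rho>)"
  proof (clarsimp simp: cyl_def evens_def)
    fix i assume "i < Suc (length \<rho>) div 2"
    then have "2*i < length \<rho>" by linarith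
    from h[OF this] show "A i = \<rho> ! (2*i)" by (simp add: join_def)
  qed
  moreover have "B \<in> cyl (odds \<rho>)"
  proof (clarsimp simp: cyl_def odds_def)
    fix i assume "i < length \<rho> div 2"
    then have "2*i+1 < length \<rho>" by linarith
    from h[OF this] show "B i = \<rho> ! Suc (2*i)" by (simp add: join_def)
  qed
  ultimately show "A \<in> cyl (evens \<rho>) \<and> B \<in> cyl (odds \<rho>)" ..
next
  assume a: "A \<in> cyl (evens \<rho>) \<and> B \<in> cyl (odds \<rho>)"
  show "join A B \<in> cyl \<rho>"
  proof (clarsimp simp: cyl_def)
    fix i assume i: "i < length \<rho>"
    show "join A B i = \<rho> ! i"
    proof (cases "even i")
      case True
      then obtain k where k: "i = 2*k" by blast
      then have "k < (length \<rho> + 1) div 2" using i by linarith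
      then show ?thesis using a k by (auto simp: cyl_def evens_def join_def)
    next
      case False
      then obtain k where k: "i = 2*k+1" using oddE by blast
      then have "k < length \<rho> div 2" using i by linarith
      then show ?thesis using a k by (auto simp: cyl_def odds_def join_def)
    qed
  qed
qed

definition join_compatible :: "bool list \<Rightarrow> bool list \<Rightarrow> bool list \<Rightarrow> bool" where
  "join_compatible \<sigma> \<tau> \<rho> \<longleftrightarrow> (\<forall>i<length \<sigma>. \<rho>!(2*i) = \<sigma>!i) \<and> (\<forall>i<length \<tau>. \<rho>!(2*i+1) = \<tau>!i)"

definition join_length :: "bool list \<Rightarrow> bool list \<Rightarrow> nat" where
  "join_length \<sigma> \<tau> = 2 * max (length \<sigma>) (length \<tau>)"

definition join_strings :: "bool list \<Rightarrow> bool list \<Rightarrow> bool list set" where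
  "join_strings \<sigma> \<tau> = {\<rho>. length \<rho> = join_length \<sigma> \<tau> \<and> join_compatible \<sigma> \<tau> \<rho>}"

lemma finite_join_strings: "finite (join_strings \<sigma> \<tau>)"
  unfolding join_strings_def by (rule finite_subset[OF _ finite_lists_length_eq[of "UNIV :: bool set" "join_length \<sigma> \<tau>"]]) auto

lemma disjoint_family_cyl: "disjoint_family_on cyl {\<rho>. length \<rho> = M}"
proof (unfold disjoint_family_on_def, intro ballI impI)
  fix \<rho> \<rho>' :: "bool list" assume "\<rho> \<in> {\<rho>. length \<rho> = M}" "\<rho>' \<in> {\<rho>. length \<rho> = M}" "\<rho> \<noteq> \<rho>'"
  then have l: "length \<rho> = M" "length \<rho>' = M" "\<rho> \<noteq> \<rho>'" by auto
  have "\<exists>i<M. \<rho> ! i \<noteq> \<rho>' ! i"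
  proof (rule ccontr)
    assume "\<not> (\<exists>i<M. \<rho> ! i \<noteq> \<rho>' ! i)"
    then have "\<rho> = \<rho>'" using l by (auto intro: nth_equalityI)
    then show False using l by simp
  qed
  then obtain i where i: "i < M" "\<rho> ! i \<noteq> \<rho>' ! i" by blast
  show "cyl \<rho> \<inter> cyl \<rho>' = {}" using i l by (auto simp: cyl_def)
qed

lemma disjoint_family_join_strings: "disjoint_family_on cyl (join_strings \<sigma> \<tau>)"
  using disjoint_family_cyl by (rule disjoint_family_on_mono[rotated]) (auto simp: join_strings_def)

lemma unjoin_vimage: "unjoin -` (cyl \<sigma> \<times> cyl \<tau>) = (\<Union>\<rho>\<in>join_strings \<sigma> \<tau>. cyl \<rho>)"
proof (rule set_eqI, rule iffI)
  fix Z assume "Z \<in> unjoin -` (cyl \<sigma> \<times> cyl \<tau>)"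
  then have Z: "\<And>i. i < length \<sigma> \<Longrightarrow> Z (2*i) = \<sigma>!i" "\<And>i. i < length \<tau> \<Longrightarrow> Z (2*i+1) = \<tau>!i"
    by (auto simp: unjoin_def cyl_def)
  let ?\<rho> = "map Z [0..<join_length \<sigma> \<tau>]"
  have "?\<rho> \<in> join_strings \<sigma> \<tau>" using Z by (auto simp: join_strings_def join_compatible_def join_length_def nth_append)
  moreover have "Z \<in> cyl ?\<rho>" by (simp add: cyl_def)
  ultimately show "Z \<in> (\<Union>\<rho>\<in>join_strings \<sigma> \<tau>. cyl \<rho>)" by blast
next
  fix Z assume "Z \<in> (\<Union>\<rho>\<in>join_strings \<sigma> \<tau>. cyl \<rho>)"
  then obtain \<rho> where r: "\<rho> \<in> join_strings \<sigma> \<tau>" "Z \<in> cyl \<rho>" by blast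
  have a: "Z (2*i) = \<sigma>!i" if "i < length \<sigma>" for i
  proof -
    have "2*i < length \<rho>" using that r by (auto simp: join_strings_def join_length_def)
    then show ?thesis using r that by (auto simp: cyl_def join_strings_def join_compatible_def)
  qed
  have b: "Z (2*i+1) = \<tau>!i" if "i < length \<tau>" for i
  proof -
    have "2*i+1 < length \<rho>" using that r by (auto simp: join_strings_def join_length_def)
    then show ?thesis using r that by (auto simp: cyl_def join_strings_def join_compatible_def)
  qed
  show "Z \<in> unjoin -` (cyl \<sigma> \<times> cyl \<tau>)" using a b by (auto simp: unjoin_def cyl_def)
qed

lemma emeasure_unjoin_vimage:
  assumes "sets \<nu> = sets cantor_space"
  shows "emeasure \<nu> (unjoin -` (cyl \<sigma> \<times> cyl \<tau>)) = (\<Sum>\<rho>\<in>join_strings \<sigma> \<tau>. emeasure \<nu> (cyl \<rho>))"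
  unfolding unjoin_vimage
  by (rule sum_emeasure[symmetric]) (use assms finite_join_strings disjoint_family_join_strings in auto)

lemma emeasure_distr_unjoin:
  assumes "sets \<nu> = sets cantor_space"
  shows "emeasure (distr \<nu> (cantor_space \<Otimes>\<^sub>M cantor_space) unjoin) (cyl \<sigma> \<times> cyl \<tau>)
     = (\<Sum>\<rho>\<in>join_strings \<sigma> \<tau>. emeasure \<nu> (cyl \<rho>))"
proof -
  have sp: "space \<nu> = UNIV" using sets_eq_imp_space_eq[OF assms] space_cantor_space by simp
  have m: "unjoin \<in> measurable \<nu> (cantor_space \<Otimes>\<^sub>M cantor_space)"
    using measurable_cong_sets[OF assms refl] unjoin_measurable by blast
  have "cyl \<sigma> \<times> cyl \<tau> \<in> sets (cantor_space \<Otimes>\<^sub>M cantor_space)" by simp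
  then show ?thesis
    using emeasure_distr[OF m] emeasure_unjoin_vimage[OF assms] sp by simp
qed

lemma emeasure_distr_join_pair:
  assumes "sets \<nu> = sets (cantor_space \<Otimes>\<^sub>M cantor_space)"
  shows "emeasure (distr \<nu> cantor_space join_pair) (cyl \<rho>) = emeasure \<nu> (cyl (evens \<rho>) \<times> cyl (odds \<rho>))"
proof -
  have sp: "space \<nu> = UNIV" using sets_eq_imp_space_eq[OF assms] space_cantor_space
    by (simp add: space_pair_measure)
  have m: "join_pair \<in> measurable \<nu> cantor_space"
    using measurable_cong_sets[OF assms refl] join_pair_measurable by blast
  have "join_pair -` cyl \<rho> = cyl (evens \<rho>) \<times> cyl (odds \<rho>)"
    by (auto simp: join_pair_def join_in_cyl)
  then show ?thesis using emeasure_distr[OF m sets_cyl] sp by simp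
qed

lemma nn_integral_distr_join_pair_cyl:
  assumes "sets \<mu> = sets (cantor_space \<Otimes>\<^sub>M cantor_space)" and t: "t \<in> borel_measurable cantor_space"
  shows "(\<integral>\<^sup>+ Z \<in> cyl \<rho>. t Z \<partial>distr \<mu> cantor_space join_pair)
       = (\<integral>\<^sup>+ z \<in> cyl (evens \<rho>) \<times> cyl (odds \<rho>). t (join_pair z) \<partial>\<mu>)"
proof -
  have m: "join_pair \<in> measurable \<mu> cantor_space"
    using measurable_cong_sets[OF assms(1) refl] join_pair_measurable by blast
  have "(\<integral>\<^sup>+ Z \<in> cyl \<rho>. t Z \<partial>distr \<mu> cantor_space join_pair) = (\<integral>\<^sup>+ z. t (join_pair z) * indicator (cyl \<rho>) (join_pair z) \<partial>\<mu>)"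
    by (rule nn_integral_distr[OF m]) (use t in simp)
  also have "\<dots> = (\<integral>\<^sup>+ z \<in> cyl (evens \<rho>) \<times> cyl (odds \<rho>). t (join_pair z) \<partial>\<mu>)"
    by (rule nn_integral_cong) (auto simp: indicator_def join_pair_def join_in_cyl)
  finally show ?thesis .
qed

lemma nn_integral_unjoin_cyl:
  assumes "sets \<mu> = sets (cantor_space \<Otimes>\<^sub>M cantor_space)" and t: "t \<in> borel_measurable cantor_space"
  shows "(\<integral>\<^sup>+ z \<in> cyl \<sigma> \<times> cyl \<tau>. t (join_pair z) \<partial>\<mu>)
       = (\<Sum>\<rho>\<in>join_strings \<sigma> \<tau>. \<integral>\<^sup>+ Z \<in> cyl \<rho>. t Z \<partial>distr \<mu> cantor_space join_pair)"
proof -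
  have m: "join_pair \<in> measurable \<mu> cantor_space"
    using measurable_cong_sets[OF assms(1) refl] join_pair_measurable by blast
  have "(\<integral>\<^sup>+ z \<in> cyl \<sigma> \<times> cyl \<tau>. t (join_pair z) \<partial>\<mu>)
      = (\<integral>\<^sup>+ z. t (join_pair z) * indicator (unjoin -` (cyl \<sigma> \<times> cyl \<tau>)) (join_pair z) \<partial>\<mu>)"
    by (rule nn_integral_cong) (auto simp: indicator_def)
  also have "\<dots> = (\<integral>\<^sup>+ Z. t Z * indicator (unjoin -` (cyl \<sigma> \<times> cyl \<tau>)) Z \<partial>distr \<mu> cantor_space join_pair)"
    by (rule nn_integral_distr[OF m, symmetric]) (use t in \<open>simp add: unjoin_vimage\<close>)
  also have "\<dots> = (\<integral>\<^sup>+ Z. (\<Sum>\<rho>\<in>join_strings \<sigma> \<tau>. t Z * indicator (cyl \<rho>) Z) \<partial>distr \<mu> cantor_space join_pair)"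
    unfolding unjoin_vimage
    by (rule nn_integral_cong) (simp add: indicator_UN_disjoint[OF finite_join_strings disjoint_family_join_strings] sum_distrib_left)
  also have "\<dots> = (\<Sum>\<rho>\<in>join_strings \<sigma> \<tau>. \<integral>\<^sup>+ Z \<in> cyl \<rho>. t Z \<partial>distr \<mu> cantor_space join_pair)"
    by (rule nn_integral_sum) (use t in simp)
  finally show ?thesis .
qed

definition bits_of :: "nat \<Rightarrow> nat \<Rightarrow> bool list" where
  "bits_of M j = map (bit j) [0..<M]"

lemma bit_mod: "(j div 2 ^ i) mod 2 = (of_bool (bit j i) :: nat)"
  by (simp add: bit_iff_odd odd_iff_mod_2_eq_one)

lemma code_bits_str_code: "code_bits M j = str_code (bits_of M j)"
  by (simp add: code_bits_def str_code_def bits_of_def bit_mod comp_def)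

lemma bij_betw_bits_of: "bij_betw (bits_of M) {..<2^M} {l. length l = M}"
proof (rule bij_betw_byWitness[where f'="horner_sum of_bool 2"])
  show "\<forall>j\<in>{..<2^M}. horner_sum of_bool 2 (bits_of M j) = j"
    by (auto simp: bits_of_def horner_sum_bit_eq_take_bit take_bit_nat_eq_self_iff)
  show "\<forall>l\<in>{l. length l = M}. bits_of M (horner_sum of_bool 2 l) = l"
    by (auto simp: bits_of_def bit_horner_sum_bit_iff intro!: nth_equalityI)
  show "bits_of M ` {..<2^M} \<subseteq> {l. length l = M}" by (auto simp: bits_of_def)
  show "horner_sum of_bool 2 ` {l. length l = M} \<subseteq> {..<2^M :: nat}"
  proof
    fix x :: nat assume "x \<in> horner_sum of_bool 2 ` {l. length l = M}"
    then obtain l :: "bool list" where l: "length l = M" "x = horner_sum of_bool 2 l" by auto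
    have "horner_sum of_bool 2 l = take_bit M (horner_sum of_bool 2 l :: nat)"
      using l by (simp add: take_bit_horner_sum_bit_eq)
    also have "\<dots> < 2 ^ M" by (rule take_bit_nat_less_exp)
    finally show "x \<in> {..<2^M :: nat}" using l by simp
  qed
qed

lemma finite_lists_length_bool: "finite {l :: bool list. length l = M}"
  using finite_lists_length_eq[of "UNIV :: bool set" M] by simp

lemma sum_join_strings:
  "(\<Sum>\<rho>\<in>join_strings \<sigma> \<tau>. F \<rho>) = (\<Sum>j<2 ^ join_length \<sigma> \<tau>. if join_compatible \<sigma> \<tau> (bits_of (join_length \<sigma> \<tau>) j) then F (bits_of (join_length \<sigma> \<tau>) j) else 0)"
proof -
  have "(\<Sum>\<rho>\<in>join_strings \<sigma> \<tau>. F \<rho>) = (\<Sum>\<rho>\<in>{l. length l = join_length \<sigma> \<tau>}. if join_compatible \<sigma> \<tau> \<rho> then F \<rho> else 0)"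
  proof -
    have "join_strings \<sigma> \<tau> = {\<rho> \<in> {l. length l = join_length \<sigma> \<tau>}. join_compatible \<sigma> \<tau> \<rho>}" by (auto simp: join_strings_def)
    then show ?thesis by (simp only: sum.inter_filter[OF finite_lists_length_bool])
  qed
  also have "\<dots> = (\<Sum>j<2 ^ join_length \<sigma> \<tau>. if join_compatible \<sigma> \<tau> (bits_of (join_length \<sigma> \<tau>) j) then F (bits_of (join_length \<sigma> \<tau>) j) else 0)"
    by (rule sum.reindex_bij_betw[OF bij_betw_bits_of, symmetric])
  finally show ?thesis .
qed

lemma code_compatible_str_code:
  assumes "M = join_length \<sigma> \<tau>"
  shows "code_compatible (str_code \<sigma>) (str_code \<tau>) j \<longleftrightarrow> join_compatible \<sigma> \<tau> (bits_of M j)"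
proof -
  have a: "2*i < M" if "i < length \<sigma>" for i using that assms by (auto simp: join_length_def)
  have b: "2*i+1 < M" if "i < length \<tau>" for i using that assms by (auto simp: join_length_def)
  show ?thesis
    unfolding code_compatible_def join_compatible_def code_length_str_code bit_mod
    using a b by (auto simp: code_nth_str_code bits_of_def)
qed

section \<open>Lower semicomputable functions along join and unjoin\<close>

definition lsc_basis :: "(nat \<Rightarrow> nat) \<Rightarrow> cantor \<Rightarrow> (bool list \<times> nat) set" where
  "lsc_basis g X = {(\<sigma>, k). (\<exists>n. g n = prod_encode (str_code \<sigma>, k)) \<and> X \<in> cyl \<sigma>}"

definition lsc2_basis :: "(nat \<Rightarrow> nat) \<Rightarrow> cantor \<Rightarrow> cantor \<Rightarrow> (bool list \<times> bool list \<times> nat) set" where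
  "lsc2_basis g X Y = {(\<sigma>, \<tau>, k). (\<exists>n. g n = prod_encode (str_code \<sigma>, prod_encode (str_code \<tau>, k)))
     \<and> X \<in> cyl \<sigma> \<and> Y \<in> cyl \<tau>}"

lemma lsc_iff_basis:
  "lsc t \<longleftrightarrow> (\<exists>g. computable g \<and> (\<forall>X. t X = (SUP p \<in> lsc_basis g X. ennreal (real_of_rat (rat_dec (snd p))))))"
  unfolding lsc_def lsc_basis_def ..

lemma lsc2_iff_basis:
  "lsc2 t \<longleftrightarrow> (\<exists>g. computable g \<and> (\<forall>X Y. t (X, Y) =
     (SUP p \<in> lsc2_basis g X Y. ennreal (real_of_rat (rat_dec (snd (snd p)))))))"
  unfolding lsc2_def lsc2_basis_def ..

lemma SUP_filter_ennreal:
  fixes f :: "'a \<Rightarrow> ennreal"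
  shows "(SUP p \<in> {p \<in> E. P p}. f p) = (SUP p \<in> E. if P p then f p else 0)"
proof (rule antisym)
  show "(SUP p \<in> {p \<in> E. P p}. f p) \<le> (SUP p \<in> E. if P p then f p else 0)"
  proof (rule SUP_least)
    fix p assume "p \<in> {p \<in> E. P p}"
    then have "p \<in> E" "P p" by auto
    then show "f p \<le> (SUP p \<in> E. if P p then f p else 0)"
      using SUP_upper[of p E "\<lambda>p. if P p then f p else 0"] by simp
  qed
  show "(SUP p \<in> E. if P p then f p else 0) \<le> (SUP p \<in> {p \<in> E. P p}. f p)"
    by (rule SUP_least) (auto intro: SUP_upper)
qed

lemma lsc_measurable:
  assumes "lsc t"
  shows "t \<in> borel_measurable cantor_space"
proof -
  obtain g where g: "\<And>X. t X = (SUP p \<in> lsc_basis g X. ennreal (real_of_rat (rat_dec (snd p))))"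
    using assms unfolding lsc_iff_basis by blast
  define E where "E = {(\<sigma>, k). \<exists>n. g n = prod_encode (str_code \<sigma>, k)}"
  have "lsc_basis g X = {p \<in> E. X \<in> cyl (fst p)}" for X
    by (auto simp: lsc_basis_def E_def)
  then have "t X = (SUP p \<in> E. if X \<in> cyl (fst p) then ennreal (real_of_rat (rat_dec (snd p))) else 0)" for X
    by (simp only: g SUP_filter_ennreal)
  then have "t = (\<lambda>X. SUP p \<in> E. if X \<in> cyl (fst p) then ennreal (real_of_rat (rat_dec (snd p))) else 0)"
    by (rule ext)
  then show ?thesis
    by (simp only:) (rule borel_measurable_SUP, simp_all add: countableI_type)
qed

lemma lsc2_measurable:
  assumes "lsc2 t"
  shows "t \<in> borel_measurable (cantor_space \<Otimes>\<^sub>M cantor_space)"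
proof -
  obtain g where g: "\<And>X Y. t (X, Y) = (SUP p \<in> lsc2_basis g X Y. ennreal (real_of_rat (rat_dec (snd (snd p)))))"
    using assms unfolding lsc2_iff_basis by blast
  define E where "E = {(\<sigma>, \<tau>, k). \<exists>n. g n = prod_encode (str_code \<sigma>, prod_encode (str_code \<tau>, k))}"
  have "lsc2_basis g X Y = {p \<in> E. (X, Y) \<in> cyl (fst p) \<times> cyl (fst (snd p))}" for X Y
    by (auto simp: lsc2_basis_def E_def)
  then have "t (X, Y) = (SUP p \<in> E. if (X, Y) \<in> cyl (fst p) \<times> cyl (fst (snd p))
      then ennreal (real_of_rat (rat_dec (snd (snd p)))) else 0)" for X Y
    by (simp only: g SUP_filter_ennreal)
  then have "t = (\<lambda>z. SUP p \<in> E. if z \<in> cyl (fst p) \<times> cyl (fst (snd p))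
      then ennreal (real_of_rat (rat_dec (snd (snd p)))) else 0)"
    by (simp add: fun_eq_iff split_paired_all)
  then show ?thesis
    by (simp only:) (rule borel_measurable_SUP, simp_all add: countableI_type)
qed

definition split_code :: "nat \<Rightarrow> nat" where
  "split_code n = prod_encode (code_evens (fst (prod_decode n)),
     prod_encode (code_odds (fst (prod_decode n)), snd (prod_decode n)))"

lemma recfn_split_code: "recfn n f \<Longrightarrow> recfn n (\<lambda>xs. split_code (f xs))"
  unfolding split_code_def
  by (intro recfn_prod_encode recfn_code_evens recfn_code_odds recfn_fst_prod_decode recfn_snd_prod_decode)

lemma split_code_str_code:
  "split_code (prod_encode (str_code \<rho>, k)) = prod_encode (str_code (evens \<rho>), prod_encode (str_code (odds \<rho>), k))"
  by (simp add: split_code_def code_evens_str_code code_odds_str_code)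

lemma split_code_eq_str_codeD:
  assumes "split_code c = prod_encode (str_code \<sigma>, prod_encode (str_code \<tau>, k))"
  obtains \<rho> where "c = prod_encode (str_code \<rho>, k)" "evens \<rho> = \<sigma>" "odds \<rho> = \<tau>"
proof -
  obtain s k' where c: "prod_decode c = (s, k')" by fastforce
  then have "code_evens s = str_code \<sigma>" "code_odds s = str_code \<tau>" "k' = k"
    using assms by (simp_all add: split_code_def)
  with c that show ?thesis
    by (metis str_code_evens_odds_of_bool prod_decode_inverse)
qed

lemma SUP_lsc_basis_join:
  fixes v :: "nat \<Rightarrow> 'a::complete_lattice"
  shows "(SUP p \<in> lsc_basis g (join A B). v (snd p))
       = (SUP q \<in> lsc2_basis (split_code \<circ> g) A B. v (snd (snd q)))"
proof (rule SUP_eq)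
  fix p assume "p \<in> lsc_basis g (join A B)"
  then obtain \<rho> k n where p: "p = (\<rho>, k)" "g n = prod_encode (str_code \<rho>, k)" "join A B \<in> cyl \<rho>"
    by (auto simp: lsc_basis_def)
  then have "(evens \<rho>, odds \<rho>, k) \<in> lsc2_basis (split_code \<circ> g) A B"
    by (auto simp: lsc2_basis_def split_code_str_code join_in_cyl intro: exI[of _ n])
  then show "\<exists>q \<in> lsc2_basis (split_code \<circ> g) A B. v (snd p) \<le> v (snd (snd q))"
    using p by force
next
  fix q assume "q \<in> lsc2_basis (split_code \<circ> g) A B"
  then obtain \<sigma> \<tau> k n where q: "q = (\<sigma>, \<tau>, k)" "A \<in> cyl \<sigma>" "B \<in> cyl \<tau>"
    and gn: "split_code (g n) = prod_encode (str_code \<sigma>, prod_encode (str_code \<tau>, k))"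
    by (auto simp: lsc2_basis_def)
  obtain \<rho> where "g n = prod_encode (str_code \<rho>, k)" "evens \<rho> = \<sigma>" "odds \<rho> = \<tau>"
    by (rule split_code_eq_str_codeD[OF gn])
  with q have "(\<rho>, k) \<in> lsc_basis g (join A B)"
    by (auto simp: lsc_basis_def join_in_cyl)
  then show "\<exists>p \<in> lsc_basis g (join A B). v (snd (snd q)) \<le> v (snd p)"
    using q by force
qed

lemma lsc2_comp_join_pair:
  assumes "lsc t"
  shows "lsc2 (\<lambda>z. t (join_pair z))"
proof -
  obtain g where g: "computable g" "\<And>X. t X = (SUP p \<in> lsc_basis g X. ennreal (real_of_rat (rat_dec (snd p))))"
    using assms unfolding lsc_iff_basis by blast
  have "computable (split_code \<circ> g)"
    unfolding computable_iff_recfn comp_def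
    by (intro recfn_split_code recfn_computable_comp[OF g(1)] recfn_proj) simp_all
  moreover have "t (join_pair (A, B)) = (SUP q \<in> lsc2_basis (split_code \<circ> g) A B. ennreal (real_of_rat (rat_dec (snd (snd q)))))"
    for A B
    by (simp add: g(2) join_pair_def) (rule SUP_lsc_basis_join)
  ultimately show ?thesis unfolding lsc2_iff_basis by blast
qed

text \<open>\<open>n = \<langle>m, j\<rangle>\<close> stands for the interleaving of the pair of strings enumerated as \<open>g m\<close>,
  padded by the bits of \<open>j\<close>, so that every extension of length \<open>join_length\<close> occurs.\<close>

definition interleave_enum :: "(nat \<Rightarrow> nat) \<Rightarrow> nat \<Rightarrow> nat" where
  "interleave_enum g n = prod_encode (code_interleave_fill (fst (prod_decode (g (fst (prod_decode n)))))
     (fst (prod_decode (snd (prod_decode (g (fst (prod_decode n))))))) (snd (prod_decode n)),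
     snd (prod_decode (snd (prod_decode (g (fst (prod_decode n)))))))"

lemma computable_interleave_enum:
  assumes g: "computable g"
  shows "computable (interleave_enum g)"
  unfolding computable_iff_recfn interleave_enum_def
  by (intro recfn_prod_encode recfn_code_interleave_fill recfn_fst_prod_decode recfn_snd_prod_decode
      recfn_computable_comp[OF g] recfn_proj) simp_all

lemma interleave_fill_of_bool:
  fixes l1 l2 :: "nat list"
  assumes p: "interleave_fill l1 l2 j = map of_bool \<rho>"
  shows "\<exists>\<sigma> \<tau>. l1 = map of_bool \<sigma> \<and> l2 = map of_bool \<tau> \<and> (\<forall>Z. Z \<in> cyl \<rho> \<longrightarrow> unjoin Z \<in> cyl \<sigma> \<times> cyl \<tau>)"
proof -
  have len: "length \<rho> = 2 * max (length l1) (length l2)"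
    using arg_cong[OF p, of length] by (simp add: interleave_fill_def)
  have e: "l1 ! i = of_bool (\<rho> ! (2*i))" if i: "i < length l1" for i
  proof -
    have lt: "2*i < 2 * max (length l1) (length l2)" using i by auto
    have "interleave_fill l1 l2 j ! (2*i) = fill_entry l1 j i (2*i)" using lt by (simp add: interleave_fill_def)
    then show ?thesis using p i lt len by (simp add: fill_entry_def)
  qed
  have o: "l2 ! i = of_bool (\<rho> ! (2*i+1))" if i: "i < length l2" for i
  proof -
    have lt: "2*i+1 < 2 * max (length l1) (length l2)" using i by auto
    have "interleave_fill l1 l2 j ! (2*i+1) = fill_entry l2 j i (2*i+1)" using lt by (simp add: interleave_fill_def)
    then show ?thesis using p i lt len by (simp add: fill_entry_def)
  qed
  define \<sigma> where "\<sigma> = map (\<lambda>i. \<rho> ! (2*i)) [0..<length l1]"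
  define \<tau> where "\<tau> = map (\<lambda>i. \<rho> ! (2*i+1)) [0..<length l2]"
  have "l1 = map of_bool \<sigma>" unfolding \<sigma>_def by (rule nth_equalityI) (simp_all add: e)
  moreover have "l2 = map of_bool \<tau>" unfolding \<tau>_def by (rule nth_equalityI) (simp_all add: o)
  moreover have "unjoin Z \<in> cyl \<sigma> \<times> cyl \<tau>" if Z: "Z \<in> cyl \<rho>" for Z
  proof -
    have "Z (2*i) = \<rho> ! (2*i)" if "i < length l1" for i using Z that len by (auto simp: cyl_def)
    moreover have "Z (2*i+1) = \<rho> ! (2*i+1)" if "i < length l2" for i using Z that len by (auto simp: cyl_def)
    ultimately show ?thesis by (auto simp: unjoin_def cyl_def \<sigma>_def \<tau>_def)
  qed
  ultimately show ?thesis by blast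
qed

lemma interleave_fill_prefix:
  assumes Z: "unjoin Z \<in> cyl \<sigma> \<times> cyl \<tau>"
  defines "\<rho> \<equiv> map Z [0..<2 * max (length \<sigma>) (length \<tau>)]"
  defines "j \<equiv> horner_sum of_bool 2 \<rho> :: nat"
  shows "interleave_fill (map of_bool \<sigma>) (map of_bool \<tau>) j = map of_bool \<rho>" "Z \<in> cyl \<rho>"
proof -
  have zs: "Z (2*i) = \<sigma> ! i" if "i < length \<sigma>" for i using Z that by (auto simp: unjoin_def cyl_def)
  have zt: "Z (2*i+1) = \<tau> ! i" if "i < length \<tau>" for i using Z that by (auto simp: unjoin_def cyl_def)
  have bj: "(j div 2 ^ i) mod 2 = of_bool (Z i)" if "i < 2 * max (length \<sigma>) (length \<tau>)" for i
    using that by (simp add: bit_mod j_def bit_horner_sum_bit_iff \<rho>_def)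
  show "interleave_fill (map of_bool \<sigma>) (map of_bool \<tau>) j = map of_bool \<rho>"
  proof (rule nth_equalityI)
    show "length (interleave_fill (map of_bool \<sigma>) (map of_bool \<tau>) j) = length (map of_bool \<rho>)"
      by (simp add: interleave_fill_def \<rho>_def)
  next
    fix i assume "i < length (interleave_fill (map of_bool \<sigma>) (map of_bool \<tau>) j)"
    then have i: "i < 2 * max (length \<sigma>) (length \<tau>)" by (simp add: interleave_fill_def)
    have "interleave_fill (map of_bool \<sigma>) (map of_bool \<tau>) j ! i = of_bool (Z i)"
    proof (cases "even i")
      case True
      then obtain k where k: "i = 2*k" by blast
      have "interleave_fill (map of_bool \<sigma>) (map of_bool \<tau>) j ! i = fill_entry (map of_bool \<sigma>) j k i"
        using i k by (simp add: interleave_fill_def)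
      then show ?thesis
        using bj[OF i] zs[of k] k by (cases "k < length \<sigma>") (simp_all add: fill_entry_def)
    next
      case False
      then obtain k where k: "i = 2*k+1" using oddE by blast
      have "interleave_fill (map of_bool \<sigma>) (map of_bool \<tau>) j ! i = fill_entry (map of_bool \<tau>) j k i"
        using i k by (simp add: interleave_fill_def)
      then show ?thesis
        using bj[OF i] zt[of k] k by (cases "k < length \<tau>") (simp_all add: fill_entry_def)
    qed
    then show "interleave_fill (map of_bool \<sigma>) (map of_bool \<tau>) j ! i = map of_bool \<rho> ! i"
      using i by (simp add: \<rho>_def)
  qed
  show "Z \<in> cyl \<rho>" by (simp add: cyl_def \<rho>_def)
qed

lemma SUP_lsc2_basis_unjoin:
  fixes v :: "nat \<Rightarrow> 'a::complete_lattice"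
  shows "(SUP q \<in> lsc2_basis g (fst (unjoin Z)) (snd (unjoin Z)). v (snd (snd q)))
       = (SUP p \<in> lsc_basis (interleave_enum g) Z. v (snd p))"
proof (rule SUP_eq)
  fix q assume "q \<in> lsc2_basis g (fst (unjoin Z)) (snd (unjoin Z))"
  then obtain \<sigma> \<tau> k m where q: "q = (\<sigma>, \<tau>, k)" "unjoin Z \<in> cyl \<sigma> \<times> cyl \<tau>"
    and gm: "g m = prod_encode (str_code \<sigma>, prod_encode (str_code \<tau>, k))"
    by (auto simp: lsc2_basis_def mem_Times_iff)
  define \<rho> where "\<rho> = map Z [0..<2 * max (length \<sigma>) (length \<tau>)]"
  define j where "j = (horner_sum of_bool 2 \<rho> :: nat)"
  have fill: "interleave_fill (map of_bool \<sigma>) (map of_bool \<tau>) j = map of_bool \<rho>" "Z \<in> cyl \<rho>"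
    using interleave_fill_prefix[OF q(2)] unfolding \<rho>_def j_def by simp_all
  then have "interleave_enum g (prod_encode (m, j)) = prod_encode (str_code \<rho>, k)"
    by (simp add: interleave_enum_def gm code_interleave_fill_def list_decode_str_code str_code_def)
  with fill have "(\<rho>, k) \<in> lsc_basis (interleave_enum g) Z"
    unfolding lsc_basis_def by blast
  then show "\<exists>p \<in> lsc_basis (interleave_enum g) Z. v (snd (snd q)) \<le> v (snd p)"
    using q by force
next
  fix p assume "p \<in> lsc_basis (interleave_enum g) Z"
  then obtain \<rho> k n where p: "p = (\<rho>, k)" "Z \<in> cyl \<rho>"
    and gn: "interleave_enum g n = prod_encode (str_code \<rho>, k)"
    by (auto simp: lsc_basis_def)
  obtain m j where mj: "prod_decode n = (m, j)" by fastforce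
  obtain c1 w where cw: "prod_decode (g m) = (c1, w)" by fastforce
  obtain c2 k' where ck: "prod_decode w = (c2, k')" by fastforce
  have "code_interleave_fill c1 c2 j = str_code \<rho>" "k' = k"
    using gn by (simp_all add: interleave_enum_def mj cw ck)
  then have "interleave_fill (list_decode c1) (list_decode c2) j = map of_bool \<rho>"
    by (simp add: code_interleave_fill_def str_code_def list_encode_eq)
  then obtain \<sigma> \<tau> where st: "list_decode c1 = map of_bool \<sigma>" "list_decode c2 = map of_bool \<tau>"
    "unjoin Z \<in> cyl \<sigma> \<times> cyl \<tau>"
    using interleave_fill_of_bool p(2) by blast
  have "c1 = str_code \<sigma>" "c2 = str_code \<tau>"
    using st(1,2) by (metis list_decode_inverse str_code_def)+
  then have "g m = prod_encode (str_code \<sigma>, prod_encode (str_code \<tau>, k))"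
    using cw ck \<open>k' = k\<close> by (metis prod_decode_inverse)
  with st(3) have "(\<sigma>, \<tau>, k) \<in> lsc2_basis g (fst (unjoin Z)) (snd (unjoin Z))"
    by (auto simp: lsc2_basis_def mem_Times_iff)
  then show "\<exists>q \<in> lsc2_basis g (fst (unjoin Z)) (snd (unjoin Z)). v (snd p) \<le> v (snd (snd q))"
    using p by force
qed

lemma lsc_comp_unjoin:
  assumes "lsc2 t"
  shows "lsc (\<lambda>Z. t (unjoin Z))"
proof -
  obtain g where g: "computable g"
    "\<And>X Y. t (X, Y) = (SUP q \<in> lsc2_basis g X Y. ennreal (real_of_rat (rat_dec (snd (snd q)))))"
    using assms unfolding lsc2_iff_basis by blast
  have "t (unjoin Z) = (SUP p \<in> lsc_basis (interleave_enum g) Z. ennreal (real_of_rat (rat_dec (snd p))))" for Z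
  proof -
    have "t (unjoin Z) = t (fst (unjoin Z), snd (unjoin Z))" by simp
    also have "\<dots> = (SUP q \<in> lsc2_basis g (fst (unjoin Z)) (snd (unjoin Z)). ennreal (real_of_rat (rat_dec (snd (snd q)))))"
      by (rule g(2))
    also have "\<dots> = (SUP p \<in> lsc_basis (interleave_enum g) Z. ennreal (real_of_rat (rat_dec (snd p))))"
      by (rule SUP_lsc2_basis_unjoin)
    finally show ?thesis .
  qed
  then show ?thesis
    unfolding lsc_iff_basis using computable_interleave_enum[OF g(1)] by blast
qed

section \<open>Computable measures along join and unjoin\<close>

lemma computable_measure_distr_join_pair:
  assumes "computable_measure2 \<nu>"
  shows "computable_measure (distr \<nu> cantor_space join_pair)"
proof -
  have sets: "sets \<nu> = sets (cantor_space \<Otimes>\<^sub>M cantor_space)"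
    using assms by (simp add: computable_measure2_def)
  note cyl_eq = emeasure_distr_join_pair[OF sets]
  obtain f where f: "computable f" and approx: "\<And>\<sigma> \<tau> k.
      \<bar>real_of_rat (rat_dec (f (prod_encode (str_code \<sigma>, prod_encode (str_code \<tau>, k))))) - measure \<nu> (cyl \<sigma> \<times> cyl \<tau>)\<bar>
        \<le> 1 / 2 ^ k"
    using assms unfolding computable_measure2_def by blast
  have "computable (f \<circ> split_code)"
    unfolding computable_iff_recfn comp_def
    by (intro recfn_computable_comp[OF f] recfn_split_code recfn_proj) simp_all
  moreover have "\<bar>real_of_rat (rat_dec ((f \<circ> split_code) (prod_encode (str_code \<rho>, k))))
      - measure (distr \<nu> cantor_space join_pair) (cyl \<rho>)\<bar> \<le> 1 / 2 ^ k" for \<rho> k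
    using approx by (simp add: split_code_str_code measure_def cyl_eq)
  moreover have "emeasure (distr \<nu> cantor_space join_pair) (cyl \<rho>) \<noteq> \<infinity>" for \<rho>
    using assms by (simp add: cyl_eq computable_measure2_def)
  ultimately show ?thesis
    unfolding computable_measure_def by auto
qed

text \<open>\<open>\<nu>([\<sigma>] \<times> [\<tau>])\<close> under \<open>unjoin\<close> is the sum of \<open>\<nu>([\<rho>])\<close> over the at most \<open>2\<^sup>M\<close> strings in
  \<open>join_strings \<sigma> \<tau>\<close>, where \<open>M = join_length \<sigma> \<tau>\<close>; approximating each summand to within
  \<open>2^-(k+M)\<close> approximates the sum to within \<open>2^-k\<close>.\<close>

definition unjoin_approx :: "(nat \<Rightarrow> nat) \<Rightarrow> nat \<Rightarrow> nat" where
  "unjoin_approx f n = (let c1 = fst (prod_decode n); c2 = fst (prod_decode (snd (prod_decode n)));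
     k = snd (prod_decode (snd (prod_decode n))); M = 2 * max (code_length c1) (code_length c2) in
     rat_code_sum (\<lambda>j. if code_compatible c1 c2 j then f (prod_encode (code_bits M j, k + M)) else 0) (2 ^ M))"

lemma computable_unjoin_approx:
  assumes f: "computable f"
  shows "computable (unjoin_approx f)"
proof -
  define c1 where "c1 ys = fst (prod_decode (ys!1))" for ys :: "nat list"
  define c2 where "c2 ys = fst (prod_decode (snd (prod_decode (ys!1))))" for ys :: "nat list"
  define k where "k ys = snd (prod_decode (snd (prod_decode (ys!1))))" for ys :: "nat list"
  define M where "M ys = 2 * max (code_length (c1 ys)) (code_length (c2 ys))" for ys
  define H where "H ys = (if code_compatible (c1 ys) (c2 ys) (ys!0)
    then f (prod_encode (code_bits (M ys) (ys!0), k ys + M ys)) else 0)" for ys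
  have max_if: "max a b = (if a \<le> b then b else a)" for a b :: nat by auto
  have r: "recfn (Suc 1) c1" "recfn (Suc 1) c2" "recfn (Suc 1) k"
    unfolding c1_def c2_def k_def by (intro recfn_fst_prod_decode recfn_snd_prod_decode recfn_proj; simp)+
  have rM: "recfn (Suc 1) M" unfolding M_def max_if
    by (intro recfn_mult recfn_const recfn_If recpred_le recfn_code_length r)
  have rH: "recfn (Suc 1) H" unfolding H_def
    by (intro recfn_If recpred_code_compatible r recfn_proj recfn_computable_comp[OF f] recfn_prod_encode
        recfn_code_bits rM recfn_add recfn_const) simp_all
  have "recfn 1 (\<lambda>xs. 2 ^ M (0 # xs))"
    unfolding M_def c1_def c2_def max_if
    by (intro recfn_pow2 recfn_mult recfn_const recfn_If recpred_le recfn_code_length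
        recfn_fst_prod_decode recfn_snd_prod_decode recfn_proj) (simp_all add: recfn_proj)
  then have "recfn 1 (\<lambda>xs. rat_code_sum (\<lambda>i. H (i # xs)) (2 ^ M (0 # xs)))"
    by (rule recfn_rat_code_sum[OF rH])
  then show ?thesis unfolding computable_iff_recfn
    by (rule recfn_cong) (simp add: unjoin_approx_def Let_def H_def M_def c1_def c2_def k_def cong: if_cong)
qed

lemma measure_distr_unjoin_cyl:
  assumes sets: "sets \<nu> = sets cantor_space" and fin: "\<And>\<rho>. emeasure \<nu> (cyl \<rho>) \<noteq> \<infinity>"
    and M: "M = join_length \<sigma> \<tau>"
  shows "measure (distr \<nu> (cantor_space \<Otimes>\<^sub>M cantor_space) unjoin) (cyl \<sigma> \<times> cyl \<tau>)
       = (\<Sum>j<2^M. if join_compatible \<sigma> \<tau> (bits_of M j) then measure \<nu> (cyl (bits_of M j)) else 0)"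
proof -
  have "measure (distr \<nu> (cantor_space \<Otimes>\<^sub>M cantor_space) unjoin) (cyl \<sigma> \<times> cyl \<tau>)
      = enn2real (\<Sum>\<rho>\<in>join_strings \<sigma> \<tau>. emeasure \<nu> (cyl \<rho>))"
    by (simp add: measure_def emeasure_distr_unjoin[OF sets])
  also have "\<dots> = (\<Sum>\<rho>\<in>join_strings \<sigma> \<tau>. measure \<nu> (cyl \<rho>))"
    using fin by (subst enn2real_sum) (auto simp: measure_def top.not_eq_extremum)
  also have "\<dots> = (\<Sum>j<2^M. if join_compatible \<sigma> \<tau> (bits_of M j) then measure \<nu> (cyl (bits_of M j)) else 0)"
    unfolding M by (rule sum_join_strings)
  finally show ?thesis .
qed

lemma unjoin_approx_error:
  assumes sets: "sets \<nu> = sets cantor_space" and fin: "\<And>\<rho>. emeasure \<nu> (cyl \<rho>) \<noteq> \<infinity>"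
    and approx: "\<And>\<rho> k. \<bar>real_of_rat (rat_dec (f (prod_encode (str_code \<rho>, k)))) - measure \<nu> (cyl \<rho>)\<bar> \<le> 1 / 2 ^ k"
  shows "\<bar>real_of_rat (rat_dec (unjoin_approx f (prod_encode (str_code \<sigma>, prod_encode (str_code \<tau>, k)))))
      - measure (distr \<nu> (cantor_space \<Otimes>\<^sub>M cantor_space) unjoin) (cyl \<sigma> \<times> cyl \<tau>)\<bar> \<le> 1 / 2 ^ k"
proof -
  define M where "M = join_length \<sigma> \<tau>"
  define q where "q = (\<lambda>j. if code_compatible (str_code \<sigma>) (str_code \<tau>) j
    then f (prod_encode (code_bits M j, k + M)) else 0)"
  define m where "m = (\<lambda>j. if join_compatible \<sigma> \<tau> (bits_of M j) then measure \<nu> (cyl (bits_of M j)) else 0)"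
  have term_error: "\<bar>max 0 (real_of_rat (rat_dec (q j))) - m j\<bar> \<le> 1 / 2 ^ (k + M)" for j
  proof (cases "join_compatible \<sigma> \<tau> (bits_of M j)")
    case True
    then have "q j = f (prod_encode (str_code (bits_of M j), k + M))"
      by (simp add: q_def code_compatible_str_code M_def code_bits_str_code)
    then have "\<bar>real_of_rat (rat_dec (q j)) - m j\<bar> \<le> 1 / 2 ^ (k + M)"
      using approx True by (simp add: m_def)
    moreover have "m j \<ge> 0" by (simp add: m_def)
    ultimately show ?thesis using abs_max_0_diff order_trans by blast
  next
    case False
    then show ?thesis by (simp add: q_def m_def code_compatible_str_code M_def rat_dec_0)
  qed
  have "unjoin_approx f (prod_encode (str_code \<sigma>, prod_encode (str_code \<tau>, k))) = rat_code_sum q (2 ^ M)"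
    by (simp add: unjoin_approx_def q_def M_def join_length_def code_length_str_code Let_def cong: if_cong)
  then have "\<bar>real_of_rat (rat_dec (unjoin_approx f (prod_encode (str_code \<sigma>, prod_encode (str_code \<tau>, k)))))
      - measure (distr \<nu> (cantor_space \<Otimes>\<^sub>M cantor_space) unjoin) (cyl \<sigma> \<times> cyl \<tau>)\<bar>
      = \<bar>\<Sum>j<2^M. max 0 (real_of_rat (rat_dec (q j))) - m j\<bar>"
    by (simp add: measure_distr_unjoin_cyl[OF sets fin M_def] m_def rat_dec_rat_code_sum of_rat_sum
        real_of_rat_max_0 sum_subtractf)
  also have "\<dots> \<le> (\<Sum>j<2^M. \<bar>max 0 (real_of_rat (rat_dec (q j))) - m j\<bar>)"
    by (rule sum_abs)
  also have "\<dots> \<le> (\<Sum>j<(2::nat)^M. 1 / 2 ^ (k + M))"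
    by (rule sum_mono) (rule term_error)
  also have "\<dots> = 1 / 2 ^ k" by (simp add: power_add)
  finally show ?thesis .
qed

lemma computable_measure2_distr_unjoin:
  assumes "computable_measure \<nu>"
  shows "computable_measure2 (distr \<nu> (cantor_space \<Otimes>\<^sub>M cantor_space) unjoin)"
proof -
  have sets: "sets \<nu> = sets cantor_space" and fin: "\<And>\<rho>. emeasure \<nu> (cyl \<rho>) \<noteq> \<infinity>"
    using assms by (simp_all add: computable_measure_def)
  obtain f where "computable f"
    and "\<And>\<rho> k. \<bar>real_of_rat (rat_dec (f (prod_encode (str_code \<rho>, k)))) - measure \<nu> (cyl \<rho>)\<bar> \<le> 1 / 2 ^ k"
    using assms unfolding computable_measure_def by blast
  then have "computable (unjoin_approx f)" and "\<And>\<sigma> \<tau> k.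
      \<bar>real_of_rat (rat_dec (unjoin_approx f (prod_encode (str_code \<sigma>, prod_encode (str_code \<tau>, k)))))
      - measure (distr \<nu> (cantor_space \<Otimes>\<^sub>M cantor_space) unjoin) (cyl \<sigma> \<times> cyl \<tau>)\<bar> \<le> 1 / 2 ^ k"
    using computable_unjoin_approx unjoin_approx_error[OF sets fin] by blast+
  moreover have "emeasure (distr \<nu> (cantor_space \<Otimes>\<^sub>M cantor_space) unjoin) (cyl \<sigma> \<times> cyl \<tau>) \<noteq> \<infinity>" for \<sigma> \<tau>
    using fin by (simp add: emeasure_distr_unjoin[OF sets] sum_Pinfty finite_join_strings)
  ultimately show ?thesis
    unfolding computable_measure2_def by auto
qed

section \<open>Transfer of tests\<close>

lemma comp_random_join_if_comp_random2:
  assumes \<mu>: "computable_measure2 \<mu>" and random: "comp_random2 \<mu> (X, Y)"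
  shows "comp_random (distr \<mu> cantor_space join_pair) (join X Y)"
  unfolding comp_random_def
proof (intro allI impI, elim conjE)
  fix t \<nu> assume t: "lsc t" and \<nu>: "computable_measure \<nu>"
    and bound: "\<forall>\<rho>. (\<integral>\<^sup>+ Z \<in> cyl \<rho>. t Z \<partial>distr \<mu> cantor_space join_pair) \<le> emeasure \<nu> (cyl \<rho>)"
  have sets_\<mu>: "sets \<mu> = sets (cantor_space \<Otimes>\<^sub>M cantor_space)" and sets_\<nu>: "sets \<nu> = sets cantor_space"
    using \<mu> \<nu> by (simp_all add: computable_measure2_def computable_measure_def)
  have "(\<integral>\<^sup>+ z \<in> cyl \<sigma> \<times> cyl \<tau>. t (join_pair z) \<partial>\<mu>)
      \<le> emeasure (distr \<nu> (cantor_space \<Otimes>\<^sub>M cantor_space) unjoin) (cyl \<sigma> \<times> cyl \<tau>)" for \<sigma> \<tau>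
  proof -
    have "(\<integral>\<^sup>+ z \<in> cyl \<sigma> \<times> cyl \<tau>. t (join_pair z) \<partial>\<mu>)
        = (\<Sum>\<rho>\<in>join_strings \<sigma> \<tau>. \<integral>\<^sup>+ Z \<in> cyl \<rho>. t Z \<partial>distr \<mu> cantor_space join_pair)"
      by (rule nn_integral_unjoin_cyl[OF sets_\<mu> lsc_measurable[OF t]])
    also have "\<dots> \<le> (\<Sum>\<rho>\<in>join_strings \<sigma> \<tau>. emeasure \<nu> (cyl \<rho>))"
      using bound by (intro sum_mono) auto
    also have "\<dots> = emeasure (distr \<nu> (cantor_space \<Otimes>\<^sub>M cantor_space) unjoin) (cyl \<sigma> \<times> cyl \<tau>)"
      by (rule emeasure_distr_unjoin[OF sets_\<nu>, symmetric])
    finally show ?thesis .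
  qed
  with random lsc2_comp_join_pair[OF t] computable_measure2_distr_unjoin[OF \<nu>]
  have "t (join_pair (X, Y)) < \<infinity>"
    unfolding comp_random2_def by blast
  then show "t (join X Y) < \<infinity>" by (simp add: join_pair_def)
qed

lemma comp_random2_if_comp_random_join:
  assumes \<mu>: "computable_measure2 \<mu>" and random: "comp_random (distr \<mu> cantor_space join_pair) (join X Y)"
  shows "comp_random2 \<mu> (X, Y)"
  unfolding comp_random2_def
proof (intro allI impI, elim conjE)
  fix t \<nu> assume t: "lsc2 t" and \<nu>: "computable_measure2 \<nu>"
    and bound: "\<forall>\<sigma> \<tau>. (\<integral>\<^sup>+ z \<in> cyl \<sigma> \<times> cyl \<tau>. t z \<partial>\<mu>) \<le> emeasure \<nu> (cyl \<sigma> \<times> cyl \<tau>)"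
  have sets_\<mu>: "sets \<mu> = sets (cantor_space \<Otimes>\<^sub>M cantor_space)"
    and sets_\<nu>: "sets \<nu> = sets (cantor_space \<Otimes>\<^sub>M cantor_space)"
    using \<mu> \<nu> by (simp_all add: computable_measure2_def)
  have "(\<integral>\<^sup>+ Z \<in> cyl \<rho>. t (unjoin Z) \<partial>distr \<mu> cantor_space join_pair)
      \<le> emeasure (distr \<nu> cantor_space join_pair) (cyl \<rho>)" for \<rho>
  proof -
    have "(\<lambda>Z. t (unjoin Z)) \<in> borel_measurable cantor_space"
      using lsc2_measurable[OF t] by simp
    then have "(\<integral>\<^sup>+ Z \<in> cyl \<rho>. t (unjoin Z) \<partial>distr \<mu> cantor_space join_pair)
        = (\<integral>\<^sup>+ z \<in> cyl (evens \<rho>) \<times> cyl (odds \<rho>). t (unjoin (join_pair z)) \<partial>\<mu>)"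
      by (rule nn_integral_distr_join_pair_cyl[OF sets_\<mu>])
    also have "\<dots> \<le> emeasure \<nu> (cyl (evens \<rho>) \<times> cyl (odds \<rho>))"
      using bound by simp
    also have "\<dots> = emeasure (distr \<nu> cantor_space join_pair) (cyl \<rho>)"
      by (rule emeasure_distr_join_pair[OF sets_\<nu>, symmetric])
    finally show ?thesis .
  qed
  with random lsc_comp_unjoin[OF t] computable_measure_distr_join_pair[OF \<nu>]
  have "t (unjoin (join X Y)) < \<infinity>"
    unfolding comp_random_def by blast
  then show "t (X, Y) < \<infinity>"
    using unjoin_join_pair[of "(X, Y)"] by (simp add: join_pair_def)
qed

theorem mainTheorem7:
  fixes \<mu> :: "(cantor \<times> cantor) measure" and X Y :: cantor
  assumes "computable_measure2 \<mu>"
  shows "comp_random2 \<mu> (X, Y) \<longleftrightarrow>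
         comp_random (distr \<mu> cantor_space (\<lambda>(A, B). join A B)) (join X Y)"
  using comp_random_join_if_comp_random2[OF assms] comp_random2_if_comp_random_join[OF assms]
  unfolding join_pair_def by blast

end
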